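(* Let $H$ be a Kekul\'ean hexagonal system. Let $\mathbb{C}$ be the set of all Clar covers of $H$, ordered by $C\le C'$ iff $f(C)\subseteq f(C')$, and let $\mathbb{Q}$ be the set of all induced subgraphs of $R(H)$ that are isomorphic to some hypercube $Q_n$ ($n\ge0$), ordered by $Q\le Q'$ iff $Q$ is a subgraph of $Q'$. Then $(\mathbb{C},\le)$ and $(\mathbb{Q},\le)$ are isomorphic posets (via $f$).
   Context: A hexagonal system is a 2-connected finite plane graph in which every interior face is a regular hexagon of side length one; its hexagons are the boundaries of its interior faces; it is Kekul\'ean if it has a perfect matching. A Clar cover of $H$ is a spanning subgraph each of whose components is a hexagon of $H$ or a single edge. The resonance graph $R(H)$ has the perfect matchings of $H$ as vertices, two adjacent iff their symmetric difference is the edge set of a hexagon of $H$. For a Clar cover $C$, $f(C)$ denotes the subgraph of $R(H)$ induced by all perfect matchings $M$ of $H$ such that every hexagon component of $C$ is $M$-alternating and every single-edge component of $C$ belongs to $M$. *)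

theory Defs
  imports Main
begin

type_synonym vert = "int \<times> int"
type_synonym edge = "vert set"

text \<open>This is the honeycomb lattice (each vertex has degree 3,
bounded faces are hexagons), drawn as a brick wall.\<close>

definition lattice_edge :: "edge \<Rightarrow> bool" where
  "lattice_edge e \<longleftrightarrow> (\<exists>a b. e = {(a,b),(a+1,b)} \<or> (even (a+b) \<and> e = {(a,b),(a,b+1)}))"

text \<open>Hexagonal cells of the lattice are indexed by their lower-left corner (x,y), x+y even.\<close>

definition is_cell :: "vert \<Rightarrow> bool" where
  "is_cell c \<longleftrightarrow> even (fst c + snd c)"

fun cell_vertex :: "vert \<Rightarrow> nat \<Rightarrow> vert" where
  "cell_vertex (x,y) i =
     (if i mod 6 = 0 then (x,y) else if i mod 6 = 1 then (x+1,y) else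
      if i mod 6 = 2 then (x+2,y) else if i mod 6 = 3 then (x+2,y+1) else
      if i mod 6 = 4 then (x+1,y+1) else (x,y+1))"

definition cell_edge :: "vert \<Rightarrow> nat \<Rightarrow> edge" where
  "cell_edge c i = {cell_vertex c i, cell_vertex c (Suc i)}"

definition cell_edges :: "vert \<Rightarrow> edge set" where
  "cell_edges c = {cell_edge c i | i. i < 6}"

definition verts :: "edge set \<Rightarrow> vert set" where
  "verts E = \<Union>E"

definition adj :: "'a set set \<Rightarrow> 'a set \<Rightarrow> ('a \<times> 'a) set" where
  "adj F W = {(u,w). {u,w} \<in> F \<and> u \<in> W \<and> w \<in> W}"

definition connected_on :: "'a set \<Rightarrow> 'a set set \<Rightarrow> bool" where
  "connected_on W F \<longleftrightarrow> (\<forall>u\<in>W. \<forall>w\<in>W. (u,w) \<in> (adj F W)\<^sup>*)"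

definition two_connected :: "edge set \<Rightarrow> bool" where
  "two_connected E \<longleftrightarrow> card (verts E) \<ge> 3 \<and> connected_on (verts E) E \<and>
     (\<forall>v\<in>verts E. connected_on (verts E - {v}) {e\<in>E. v \<notin> e})"

text \<open>Hexagons of H: the lattice cells whose whole boundary lies in H (these are exactly the
boundaries of the interior faces which are hexagons).\<close>
definition hexes :: "edge set \<Rightarrow> vert set" where
  "hexes E = {c. is_cell c \<and> cell_edges c \<subseteq> E}"

text \<open>Two cells lie in the same face of H if they can be joined by crossing edges not in H.\<close>
definition cell_adj :: "edge set \<Rightarrow> (vert \<times> vert) set" where
  "cell_adj E = {(c,d). is_cell c \<and> is_cell d \<and> c \<noteq> d \<and>
                        (\<exists>e. e \<in> cell_edges c \<and> e \<in> cell_edges d \<and> e \<notin> E)}"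

text \<open>A hexagonal system: a finite 2-connected subgraph of the honeycomb lattice, every
interior (bounded) face of which is a single hexagonal cell.  The faces of H correspond to the
classes of cells under crossing non-edges of H; the bounded faces are the finite classes.  So
every cell not bounded entirely by H must lie in the unbounded (infinite) class.\<close>
definition hexagonal_system :: "edge set \<Rightarrow> bool" where
  "hexagonal_system E \<longleftrightarrow> finite E \<and> (\<forall>e\<in>E. lattice_edge e) \<and> two_connected E \<and>
     (\<forall>c. is_cell c \<and> \<not> cell_edges c \<subseteq> E \<longrightarrow> infinite {d. (c,d) \<in> (cell_adj E)\<^sup>*})"

definition perfect_matching :: "edge set \<Rightarrow> edge set \<Rightarrow> bool" where
  "perfect_matching E M \<longleftrightarrow> M \<subseteq> E \<and> (\<forall>v\<in>verts E. \<exists>!e. e \<in> M \<and> v \<in> e)"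

definition kekulean :: "edge set \<Rightarrow> bool" where
  "kekulean E \<longleftrightarrow> (\<exists>M. perfect_matching E M)"

definition alternating :: "edge set \<Rightarrow> vert \<Rightarrow> bool" where
  "alternating M c \<longleftrightarrow> (\<forall>i<6. cell_edge c i \<in> M \<longleftrightarrow> cell_edge c (Suc i) \<notin> M)"

type_synonym 'a graph = "'a set \<times> 'a set set"

definition resonance_graph :: "edge set \<Rightarrow> edge set graph" where
  "resonance_graph E =
    ({M. perfect_matching E M},
     {{M, M'} | M M'. perfect_matching E M \<and> perfect_matching E M' \<and>
                      (\<exists>c\<in>hexes E. M - M' \<union> (M' - M) = cell_edges c)})"

definition induced_subgraph :: "'a graph \<Rightarrow> 'a set \<Rightarrow> 'a graph" where
  "induced_subgraph G W = (W, {e \<in> snd G. e \<subseteq> W})"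

definition subgraph :: "'a graph \<Rightarrow> 'a graph \<Rightarrow> bool" where
  "subgraph G G' \<longleftrightarrow> fst G \<subseteq> fst G' \<and> snd G \<subseteq> snd G'"

definition graph_iso :: "'a graph \<Rightarrow> 'b graph \<Rightarrow> bool" where
  "graph_iso G G' \<longleftrightarrow> (\<exists>\<phi>. bij_betw \<phi> (fst G) (fst G') \<and>
     (\<forall>u\<in>fst G. \<forall>v\<in>fst G. {u,v} \<in> snd G \<longleftrightarrow> {\<phi> u, \<phi> v} \<in> snd G'))"

definition hypercube :: "nat \<Rightarrow> bool list graph" where
  "hypercube n = ({xs. length xs = n},
     {{xs, ys} | xs ys. length xs = n \<and> length ys = n \<and> card {i. i < n \<and> xs ! i \<noteq> ys ! i} = 1})"

definition comp :: "edge set \<Rightarrow> edge set \<Rightarrow> vert \<Rightarrow> vert set" where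
  "comp E F v = {w. (v,w) \<in> (adj F (verts E))\<^sup>*}"

definition comp_edges :: "edge set \<Rightarrow> edge set \<Rightarrow> vert \<Rightarrow> edge set" where
  "comp_edges E F v = {e \<in> F. e \<subseteq> comp E F v}"

text \<open>A Clar cover, represented by its edge set F (it is a spanning subgraph of H): every
component is a hexagon of H or a single edge.\<close>
definition clar_cover :: "edge set \<Rightarrow> edge set \<Rightarrow> bool" where
  "clar_cover E F \<longleftrightarrow> F \<subseteq> E \<and>
     (\<forall>v\<in>verts E. (\<exists>c\<in>hexes E. comp_edges E F v = cell_edges c) \<or> (\<exists>e. comp_edges E F v = {e}))"

definition hex_comps :: "edge set \<Rightarrow> edge set \<Rightarrow> vert set" where
  "hex_comps E F = {c\<in>hexes E. \<exists>v\<in>verts E. comp_edges E F v = cell_edges c}"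

definition edge_comps :: "edge set \<Rightarrow> edge set \<Rightarrow> edge set" where
  "edge_comps E F = {e. \<exists>v\<in>verts E. comp_edges E F v = {e}}"

definition fC :: "edge set \<Rightarrow> edge set \<Rightarrow> edge set graph" where
  "fC E F = induced_subgraph (resonance_graph E)
     {M. perfect_matching E M \<and> (\<forall>c\<in>hex_comps E F. alternating M c) \<and>
         (\<forall>e\<in>edge_comps E F. e \<in> M)}"

definition clar_le :: "edge set \<Rightarrow> edge set \<Rightarrow> edge set \<Rightarrow> bool" where
  "clar_le E F F' \<longleftrightarrow> subgraph (fC E F) (fC E F')"

definition hypercube_subgraphs :: "edge set \<Rightarrow> edge set graph set" where
  "hypercube_subgraphs E = {G. (\<exists>W \<subseteq> fst (resonance_graph E). G = induced_subgraph (resonance_graph E) W)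
                               \<and> (\<exists>n. graph_iso G (hypercube n))}"

end

theory Submission
  imports Defs
begin

text \<open>The perfect matchings in \<open>f(C)\<close> arise by choosing independently one of
  the two halves of every hexagon of \<open>C\<close>, and two of them are adjacent in \<open>R(H)\<close> exactly when the
  choices differ at one hexagon; so \<open>f(C)\<close> is a hypercube whose matchings have union \<open>C\<close>,
  which makes \<open>f\<close> injective. Conversely, let an induced hypercube have base vertex \<open>M\<^sub>0\<close> and
  neighbours \<open>M\<^sub>i = M\<^sub>0 \<triangle> h\<^sub>i\<close>. Two distinct hexagons of the honeycomb share at most one edge,
  which forces every square of the cube to flip the same two hexagons on opposite sides; hence the
  \<open>h\<^sub>i\<close> are pairwise disjoint and each cube vertex is \<open>M\<^sub>0\<close> with some of the \<open>h\<^sub>i\<close> flipped. The cube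
  is then \<open>f\<close> of the Clar cover formed by the \<open>h\<^sub>i\<close> and the remaining edges of \<open>M\<^sub>0\<close>, by counting.\<close>

section \<open>Geometry of hexagonal cells\<close>

definition cell_vertices :: "vert \<Rightarrow> vert set" where
  "cell_vertices c = {cell_vertex c i | i. i < 6}"

definition cell_half :: "vert \<Rightarrow> bool \<Rightarrow> edge set" where
  "cell_half c b = {cell_edge c i | i. i < 6 \<and> odd i = b}"

lemma less_6_cases: "(i::nat) < 6 \<Longrightarrow> i = 0 \<or> i = 1 \<or> i = 2 \<or> i = 3 \<or> i = 4 \<or> i = 5"
  by arith

lemma cell_vertex_mod: "cell_vertex c (i mod 6) = cell_vertex c i"
  by (cases c) simp

lemma cell_edge_mod: "cell_edge c (i mod 6) = cell_edge c i"
  unfolding cell_edge_def by (metis cell_vertex_mod mod_Suc_eq)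

lemma cell_vertex_eq_iff: "cell_vertex c i = cell_vertex c k \<longleftrightarrow> i mod 6 = k mod 6"
proof -
  have "cell_vertex c i = cell_vertex c k \<longleftrightarrow> i = k" if "i < 6" "k < 6" for i k
    using that by (cases c) (auto dest!: less_6_cases)
  then show ?thesis
    by (metis cell_vertex_mod mod_less_divisor zero_less_numeral)
qed

lemma mem_cell_edge: "v \<in> cell_edge c i \<longleftrightarrow> v = cell_vertex c i \<or> v = cell_vertex c (Suc i)"
  by (auto simp: cell_edge_def)

lemma cell_edge_endpoints_neq: "cell_vertex c i \<noteq> cell_vertex c (Suc i)"
  by (simp add: cell_vertex_eq_iff mod_Suc)

lemma cell_edge_eq_iff: "cell_edge c i = cell_edge c k \<longleftrightarrow> i mod 6 = k mod 6"
proof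
  assume eq: "cell_edge c i = cell_edge c k"
  have "cell_vertex c i \<in> cell_edge c k" "cell_vertex c (Suc i) \<in> cell_edge c k"
    unfolding eq[symmetric] by (simp_all add: mem_cell_edge)
  then have "i mod 6 = k mod 6 \<or> i mod 6 = Suc k mod 6"
    "Suc i mod 6 = k mod 6 \<or> Suc i mod 6 = Suc k mod 6"
    by (simp_all add: mem_cell_edge cell_vertex_eq_iff)
  then show "i mod 6 = k mod 6"
    by (auto simp: mod_Suc split: if_splits)
qed (metis cell_edge_mod)

lemma cell_edges_eq_range: "cell_edges c = range (cell_edge c)"
  unfolding cell_edges_def
  by (auto simp: image_iff) (metis cell_edge_mod mod_less_divisor zero_less_numeral)

lemma cell_edge_in_cell_edges: "cell_edge c i \<in> cell_edges c"
  by (simp add: cell_edges_eq_range)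

lemma card_cell_edges: "card (cell_edges c) = 6"
proof -
  have "cell_edges c = cell_edge c ` {..<6}"
    by (auto simp: cell_edges_def)
  moreover have "inj_on (cell_edge c) {..<6}"
    by (auto simp: inj_on_def cell_edge_eq_iff)
  ultimately show ?thesis
    by (simp add: card_image)
qed

lemma cell_edges_ne_singleton: "cell_edges c \<noteq> {e}"
  using card_cell_edges[of c] by auto

lemma finite_cell_edges: "finite (cell_edges c)"
  by (rule card_ge_0_finite) (simp add: card_cell_edges)

lemma cell_edge_doubleton: "e \<in> cell_edges c \<Longrightarrow> \<exists>p q. e = {p, q} \<and> p \<noteq> q"
  unfolding cell_edges_def cell_edge_def using cell_edge_endpoints_neq by blast

lemma cell_vertex_in_cell_vertices: "cell_vertex c i \<in> cell_vertices c"
  unfolding cell_vertices_def by (metis (mono_tags) CollectI cell_vertex_mod mod_less_divisor zero_less_numeral)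

lemma cell_vertices_eq_Union: "cell_vertices c = \<Union>(cell_edges c)"
proof
  show "cell_vertices c \<subseteq> \<Union>(cell_edges c)"
    by (auto simp: cell_vertices_def cell_edges_def cell_edge_def)
  show "\<Union>(cell_edges c) \<subseteq> cell_vertices c"
    by (auto simp: cell_edges_eq_range mem_cell_edge cell_vertex_in_cell_vertices)
qed

lemma cell_edge_subset_vertices: "e \<in> cell_edges c \<Longrightarrow> e \<subseteq> cell_vertices c"
  using cell_vertices_eq_Union by blast

lemma cell_vertices_box:
  "cell_vertices (x, y) = {(a, b). x \<le> a \<and> a \<le> x + 2 \<and> y \<le> b \<and> b \<le> y + 1}"
proof
  show "cell_vertices (x, y) \<subseteq> {(a, b). x \<le> a \<and> a \<le> x + 2 \<and> y \<le> b \<and> b \<le> y + 1}"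
    unfolding cell_vertices_def by clarify (drule less_6_cases, elim disjE, simp_all)
  show "{(a, b). x \<le> a \<and> a \<le> x + 2 \<and> y \<le> b \<and> b \<le> y + 1} \<subseteq> cell_vertices (x, y)"
  proof clarify
    fix a b assume "x \<le> a" "a \<le> x + 2" "y \<le> b" "b \<le> y + 1"
    then have "a = x \<or> a = x + 1 \<or> a = x + 2" "b = y \<or> b = y + 1"
      by arith+
    then show "(a, b) \<in> cell_vertices (x, y)"
      unfolding cell_vertices_def
      by (intro CollectI exI[of _ "if b = y then nat (a - x) else 5 - nat (a - x)"]) (elim disjE; simp)
  qed
qed

lemma three_distinct_in_unit_interval:
  "(l::int) \<le> u1 \<Longrightarrow> u1 \<le> l + 1 \<Longrightarrow> l \<le> u2 \<Longrightarrow> u2 \<le> l + 1 \<Longrightarrow> l \<le> u3 \<Longrightarrow> u3 \<le> l + 1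
   \<Longrightarrow> u1 \<noteq> u2 \<Longrightarrow> u1 \<noteq> u3 \<Longrightarrow> u2 \<noteq> u3 \<Longrightarrow> False"
  by arith

text \<open>Two distinct cell boxes overlap in at most two lattice points: distinct cells in the same row
  are at least two columns apart, and cells in adjacent rows an odd number of columns apart.\<close>

lemma cell_boxes_three_common_points:
  fixes x y x' y' a1 b1 a2 b2 a3 b3 :: int
  assumes cells: "even (x + y)" "even (x' + y')"
    and box: "x \<le> a1" "a1 \<le> x + 2" "y \<le> b1" "b1 \<le> y + 1"
      "x \<le> a2" "a2 \<le> x + 2" "y \<le> b2" "b2 \<le> y + 1"
      "x \<le> a3" "a3 \<le> x + 2" "y \<le> b3" "b3 \<le> y + 1"
      "x' \<le> a1" "a1 \<le> x' + 2" "y' \<le> b1" "b1 \<le> y' + 1"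
      "x' \<le> a2" "a2 \<le> x' + 2" "y' \<le> b2" "b2 \<le> y' + 1"
      "x' \<le> a3" "a3 \<le> x' + 2" "y' \<le> b3" "b3 \<le> y' + 1"
    and distinct: "(a1, b1) \<noteq> (a2, b2)" "(a1, b1) \<noteq> (a3, b3)" "(a2, b2) \<noteq> (a3, b3)"
  shows "x = x' \<and> y = y'"
proof -
  have y: "y' = y - 1 \<or> y' = y \<or> y' = y + 1"
    using box by arith
  have x: "x' = x - 2 \<or> x' = x - 1 \<or> x' = x \<or> x' = x + 1 \<or> x' = x + 2"
    using box by arith
  have d: "a1 \<noteq> a2 \<or> b1 \<noteq> b2" "a1 \<noteq> a3 \<or> b1 \<noteq> b3" "a2 \<noteq> a3 \<or> b2 \<noteq> b3"
    using distinct by auto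
  show ?thesis
  proof (cases "y' = y")
    case True
    then have "even (x' - x)"
      using cells by presburger
    then have "x' = x - 2 \<or> x' = x \<or> x' = x + 2"
      using x by presburger
    moreover have False if "x' = x + 2"
    proof -
      from that have "a1 = x + 2" "a2 = x + 2" "a3 = x + 2"
        using box by arith+
      then show False
        using three_distinct_in_unit_interval[of y b1 b2 b3] d box by auto
    qed
    moreover have False if "x' = x - 2"
    proof -
      from that have "a1 = x" "a2 = x" "a3 = x"
        using box by arith+
      then show False
        using three_distinct_in_unit_interval[of y b1 b2 b3] d box by auto
    qed
    ultimately show ?thesis
      using True by auto
  next
    case False
    then have rows: "y' = y - 1 \<or> y' = y + 1"
      using y by auto
    then have "odd (x' - x)"
      using cells by presburger
    then have "x' = x - 1 \<or> x' = x + 1"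
      using x by presburger
    then have "max x x' \<le> a1 \<and> a1 \<le> max x x' + 1 \<and> max x x' \<le> a2 \<and> a2 \<le> max x x' + 1
        \<and> max x x' \<le> a3 \<and> a3 \<le> max x x' + 1"
      using box by arith
    moreover have "b1 = b2 \<and> b1 = b3 \<and> b2 = b3"
      using rows box by arith
    ultimately have False
      using three_distinct_in_unit_interval[of "max x x'" a1 a2 a3] d by auto
    then show ?thesis ..
  qed
qed

lemma cell_eq_if_three_common_vertices:
  assumes "is_cell c" "is_cell d"
    and "p \<in> cell_vertices c" "q \<in> cell_vertices c" "r \<in> cell_vertices c"
    and "p \<in> cell_vertices d" "q \<in> cell_vertices d" "r \<in> cell_vertices d"
    and "p \<noteq> q" "p \<noteq> r" "q \<noteq> r"
  shows "c = d"
proof -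
  obtain x y x' y' a1 b1 a2 b2 a3 b3
    where pts: "c = (x, y)" "d = (x', y')" "p = (a1, b1)" "q = (a2, b2)" "r = (a3, b3)"
    by (metis surj_pair)
  show ?thesis
    using assms unfolding pts cell_vertices_box is_cell_def
    using cell_boxes_three_common_points[of x y x' y' a1 b1 a2 b2 a3 b3] by auto
qed

lemma cell_eq_if_two_common_edges:
  assumes "is_cell c" "is_cell d" "e1 \<in> cell_edges c" "e1 \<in> cell_edges d"
    "e2 \<in> cell_edges c" "e2 \<in> cell_edges d" "e1 \<noteq> e2"
  shows "c = d"
proof -
  obtain p q where pq: "e1 = {p, q}" "p \<noteq> q"
    using cell_edge_doubleton assms(3) by blast
  obtain t where t: "t \<in> e2" "t \<notin> e1"
    using cell_edge_doubleton[OF assms(5)] pq assms(7) by blast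
  show ?thesis
    by (rule cell_eq_if_three_common_vertices[OF assms(1,2), of p q t])
      (use pq t cell_edge_subset_vertices[OF assms(3)] cell_edge_subset_vertices[OF assms(4)]
        cell_edge_subset_vertices[OF assms(5)] cell_edge_subset_vertices[OF assms(6)] in auto)
qed

lemma card_common_cell_edges:
  assumes "is_cell c" "is_cell d" "c \<noteq> d"
  shows "card (cell_edges c \<inter> cell_edges d) \<le> 1"
  using cell_eq_if_two_common_edges[OF assms(1,2)] assms(3) finite_cell_edges
    card_le_Suc0_iff_eq[of "cell_edges c \<inter> cell_edges d"] by auto

lemma cell_edges_subset_imp_eq:
  assumes "is_cell c" "is_cell d" "cell_edges c \<subseteq> cell_edges d"
  shows "c = d"
  using card_common_cell_edges[OF assms(1,2)] assms(3) card_cell_edges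
  by (metis Int_absorb2 numeral_le_one_iff semiring_norm(69))

section \<open>Perfect matchings and alternating hexagons\<close>

lemma sym_diff_commute: "sym_diff A B = sym_diff B A"
  by blast

lemma sym_diff_sym_diff_cancel: "sym_diff A (sym_diff A B) = B"
  by blast

lemma sym_diff_left_cancel: "sym_diff A B = sym_diff A C \<Longrightarrow> B = C"
  by (metis sym_diff_sym_diff_cancel)

lemma resonance_edge_iff:
  "{M, M'} \<in> snd (resonance_graph E) \<longleftrightarrow>
     perfect_matching E M \<and> perfect_matching E M' \<and> (\<exists>c\<in>hexes E. sym_diff M M' = cell_edges c)"
  unfolding resonance_graph_def
  by (auto simp: doubleton_eq_iff Un_commute)

lemma fst_resonance_graph: "fst (resonance_graph E) = {M. perfect_matching E M}"
  unfolding resonance_graph_def by simp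

lemma fst_induced_subgraph: "fst (induced_subgraph G W) = W"
  unfolding induced_subgraph_def by simp

lemma induced_subgraph_edge_iff:
  "u \<in> W \<Longrightarrow> v \<in> W \<Longrightarrow> {u, v} \<in> snd (induced_subgraph G W) \<longleftrightarrow> {u, v} \<in> snd G"
  unfolding induced_subgraph_def by auto

lemma perfect_matching_edge_unique:
  "perfect_matching E M \<Longrightarrow> e \<in> M \<Longrightarrow> e' \<in> M \<Longrightarrow> v \<in> e \<Longrightarrow> v \<in> e' \<Longrightarrow> e = e'"
  unfolding perfect_matching_def verts_def by blast

lemma perfect_matching_edge_exists:
  "perfect_matching E M \<Longrightarrow> v \<in> verts E \<Longrightarrow> \<exists>e\<in>M. v \<in> e"
  unfolding perfect_matching_def by blast

lemma mem_vertsI: "e \<in> E \<Longrightarrow> v \<in> e \<Longrightarrow> v \<in> verts E"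
  unfolding verts_def by blast

lemma cell_vertices_subset_verts: "c \<in> hexes E \<Longrightarrow> cell_vertices c \<subseteq> verts E"
  unfolding hexes_def verts_def cell_vertices_eq_Union by blast

lemma hexes_is_cell: "c \<in> hexes E \<Longrightarrow> is_cell c"
  by (simp add: hexes_def)

lemma alternating_cell_edge_Suc:
  assumes "alternating M c"
  shows "cell_edge c i \<in> M \<longleftrightarrow> cell_edge c (Suc i) \<notin> M"
proof -
  have "cell_edge c (Suc (i mod 6)) = cell_edge c (Suc i)"
    by (simp add: cell_edge_eq_iff mod_Suc)
  then show ?thesis
    using assms unfolding alternating_def by (metis cell_edge_mod mod_less_divisor zero_less_numeral)
qed

lemma alternating_matching_edge_in_cell:
  assumes M: "perfect_matching E M" and alt: "alternating M c"
    and v: "v \<in> cell_vertices c" and e: "e \<in> M" "v \<in> e"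
  shows "e \<in> cell_edges c"
proof -
  obtain k where "v = cell_vertex c k"
    using v unfolding cell_vertices_def by blast
  then have "v = cell_vertex c (Suc (k + 5))"
    by (simp add: cell_vertex_eq_iff)
  then have "v \<in> cell_edge c (k + 5)" "v \<in> cell_edge c (Suc (k + 5))"
    by (simp_all add: mem_cell_edge)
  moreover have "cell_edge c (k + 5) \<in> M \<or> cell_edge c (Suc (k + 5)) \<in> M"
    using alternating_cell_edge_Suc[OF alt] by blast
  ultimately show ?thesis
    using perfect_matching_edge_unique[OF M e(1) _ e(2)] cell_edge_in_cell_edges by metis
qed

lemma alternating_if_sym_diff_cell:
  assumes M: "perfect_matching E M" and M': "perfect_matching E M'"
    and diff: "sym_diff M M' = cell_edges c"
  shows "alternating M c"
  unfolding alternating_def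
proof (intro allI impI)
  fix i :: nat
  let ?a = "cell_edge c i" and ?b = "cell_edge c (Suc i)" and ?v = "cell_vertex c (Suc i)"
  have "?a \<noteq> ?b"
    by (simp add: cell_edge_eq_iff mod_Suc)
  moreover have "?v \<in> ?a" "?v \<in> ?b"
    by (auto simp: mem_cell_edge)
  moreover have "?a \<in> sym_diff M M'" "?b \<in> sym_diff M M'"
    using diff cell_edge_in_cell_edges by blast+
  ultimately show "?a \<in> M \<longleftrightarrow> ?b \<notin> M"
    using perfect_matching_edge_unique[OF M, of ?a ?b ?v] perfect_matching_edge_unique[OF M', of ?a ?b ?v]
    by blast
qed

lemma alternating_cell_edge_iff:
  assumes "alternating M c"
  shows "cell_edge c i \<in> M \<longleftrightarrow> (odd i \<longleftrightarrow> cell_edge c 1 \<in> M)"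
proof (induction i)
  case 0
  then show ?case
    using alternating_cell_edge_Suc[OF assms, of 0] by simp
next
  case (Suc i)
  then show ?case
    using alternating_cell_edge_Suc[OF assms, of i] by auto
qed

lemma mem_cell_half: "cell_edge c i \<in> cell_half c b \<longleftrightarrow> odd i = b"
proof -
  have "odd (i mod 6) = odd i"
    by (simp add: odd_iff_mod_2_eq_one mod_mod_cancel)
  then show ?thesis
    unfolding cell_half_def
    by (auto simp: cell_edge_eq_iff) (metis mod_less_divisor mod_mod_trivial zero_less_numeral)
qed

lemma cell_half_subset: "cell_half c b \<subseteq> cell_edges c"
  unfolding cell_half_def cell_edges_def by blast

lemma cell_edges_half_cases: "e \<in> cell_edges c \<Longrightarrow> e \<in> cell_half c b \<or> e \<in> cell_half c (\<not> b)"
  unfolding cell_edges_def cell_half_def by blast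

lemma cell_half_disjoint: "e \<in> cell_half c b \<Longrightarrow> e \<in> cell_half c b' \<Longrightarrow> b = b'"
  unfolding cell_half_def using mem_cell_half unfolding cell_half_def by blast

lemma cell_half_perfect:
  assumes "v \<in> cell_vertices c"
  shows "\<exists>!e. e \<in> cell_half c b \<and> v \<in> e"
proof -
  obtain k where k: "k < 6" "v = cell_vertex c k"
    using assms unfolding cell_vertices_def by blast
  have mem: "v \<in> cell_edge c i \<longleftrightarrow> i mod 6 = k \<or> Suc i mod 6 = k" for i
    using k by (auto simp: mem_cell_edge cell_vertex_eq_iff)
  define i where "i = (if odd k = b then k else (k + 5) mod 6)"
  have i: "i < 6" "odd i = b" "i mod 6 = k \<or> Suc i mod 6 = k"
    using k(1) unfolding i_def by (auto dest!: less_6_cases)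
  show ?thesis
  proof (rule ex1I[of _ "cell_edge c i"])
    show "cell_edge c i \<in> cell_half c b \<and> v \<in> cell_edge c i"
      using i by (simp add: mem_cell_half mem)
  next
    fix e assume e: "e \<in> cell_half c b \<and> v \<in> e"
    then obtain j where j: "j < 6" "odd j = b" "e = cell_edge c j"
      unfolding cell_half_def by blast
    then have "j mod 6 = k \<or> Suc j mod 6 = k"
      using e mem by blast
    moreover have "Suc i mod 6 = (if i = 5 then 0 else Suc i)" "Suc j mod 6 = (if j = 5 then 0 else Suc j)"
      using i(1) j(1) by (auto simp: mod_Suc)
    ultimately have "j = i"
      using i j k(1) by (auto split: if_splits; presburger)
    then show "e = cell_edge c i"
      using j by simp
  qed
qed

section \<open>Components of spanning subgraphs\<close>

lemma lattice_edge_doubleton: "lattice_edge e \<Longrightarrow> \<exists>p q. e = {p, q} \<and> p \<noteq> q"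
  unfolding lattice_edge_def by (metis add_cancel_left_right one_neq_zero prod.inject)

lemma lattice_edge_other_end: "lattice_edge e \<Longrightarrow> v \<in> e \<Longrightarrow> \<exists>w. e = {v, w}"
  using lattice_edge_doubleton by blast

lemma lattice_edge_nonempty: "lattice_edge e \<Longrightarrow> e \<noteq> {}"
  using lattice_edge_doubleton by blast

lemma cell_edge_nonempty: "e \<in> cell_edges c \<Longrightarrow> e \<noteq> {}"
  using cell_edge_doubleton by blast

lemma sym_adj: "sym (adj F W)"
  unfolding sym_def adj_def by (simp add: insert_commute)

lemma adjI: "{u, w} \<in> F \<Longrightarrow> u \<in> W \<Longrightarrow> w \<in> W \<Longrightarrow> (u, w) \<in> adj F W"
  unfolding adj_def by auto

lemma comp_subset_if_closed:
  assumes "v \<in> K" and closed: "\<And>w w'. w \<in> K \<Longrightarrow> {w, w'} \<in> F \<Longrightarrow> w' \<in> K"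
  shows "comp E F v \<subseteq> K"
proof
  fix x assume "x \<in> comp E F v"
  then have "(v, x) \<in> (adj F (verts E))\<^sup>*"
    unfolding comp_def by simp
  then show "x \<in> K"
    by (induction rule: rtrancl_induct) (use assms(1) closed in \<open>auto simp: adj_def\<close>)
qed

lemma comp_eq_if_mem:
  assumes "u \<in> comp E F v"
  shows "comp E F u = comp E F v"
proof -
  let ?R = "(adj F (verts E))\<^sup>*"
  have vu: "(v, u) \<in> ?R"
    using assms unfolding comp_def by simp
  then have "(u, v) \<in> ?R"
    using sym_rtrancl[OF sym_adj] by (rule symD[rotated])
  with vu show ?thesis
    unfolding comp_def by (blast intro: rtrancl_trans)
qed

lemma comp_edges_eq_if_mem:
  assumes "u \<in> \<Union>(comp_edges E F v)"
  shows "comp_edges E F u = comp_edges E F v"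
proof -
  have "u \<in> comp E F v"
    using assms unfolding comp_edges_def by blast
  then show ?thesis
    unfolding comp_edges_def by (simp add: comp_eq_if_mem)
qed

lemma comp_edges_subset: "comp_edges E F v \<subseteq> F"
  unfolding comp_edges_def by blast

lemma cell_vertices_subset_comp:
  assumes "cell_edges c \<subseteq> E" "cell_edges c \<subseteq> F" and v: "v \<in> cell_vertices c"
  shows "cell_vertices c \<subseteq> comp E F v"
proof
  let ?R = "adj F (verts E)"
  obtain k where k: "v = cell_vertex c k"
    using v unfolding cell_vertices_def by blast
  have walk: "(cell_vertex c k, cell_vertex c (k + m)) \<in> ?R\<^sup>*" for m
  proof (induction m)
    case (Suc m)
    have "cell_edge c (k + m) \<in> F" "cell_edge c (k + m) \<in> E"
      using assms(1,2) cell_edge_in_cell_edges by blast+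
    then have "(cell_vertex c (k + m), cell_vertex c (k + Suc m)) \<in> ?R"
      by (intro adjI) (auto simp: cell_edge_def intro: mem_vertsI)
    then show ?case
      by (rule rtrancl_into_rtrancl[OF Suc.IH])
  qed simp
  fix w assume "w \<in> cell_vertices c"
  then obtain i where i: "w = cell_vertex c i"
    unfolding cell_vertices_def by blast
  have "cell_vertex c (k + (5 * k + i)) = cell_vertex c i"
    by (simp add: cell_vertex_eq_iff)
  then show "w \<in> comp E F v"
    using walk[of "5 * k + i"] k i unfolding comp_def by simp
qed

lemma mem_Union_comp_edges:
  assumes "e \<in> comp_edges E F v" "e \<noteq> {}"
  shows "v \<in> \<Union>(comp_edges E F v)"
proof -
  obtain w where w: "w \<in> e"
    using assms(2) by blast
  then have "(v, w) \<in> (adj F (verts E))\<^sup>*"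
    using assms(1) unfolding comp_edges_def comp_def by blast
  then show ?thesis
  proof (cases rule: converse_rtranclE)
    case base
    then show ?thesis
      using w assms(1) by blast
  next
    case (step y)
    then have "{v, y} \<in> F" "v \<in> comp E F v" "y \<in> comp E F v"
      unfolding adj_def comp_def by auto
    then have "{v, y} \<in> comp_edges E F v"
      unfolding comp_edges_def by auto
    then show ?thesis
      by blast
  qed
qed

section \<open>Clar data: disjoint hexagons and a matching of the remaining vertices\<close>

definition hex_edges :: "vert set \<Rightarrow> edge set" where
  "hex_edges HS = \<Union>(cell_edges ` HS)"

definition clar_matchings :: "edge set \<Rightarrow> vert set \<Rightarrow> edge set \<Rightarrow> edge set set" where
  "clar_matchings E HS EC =
     {M. perfect_matching E M \<and> (\<forall>c\<in>HS. alternating M c) \<and> (\<forall>e\<in>EC. e \<in> M)}"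

lemma fC_eq_clar_matchings:
  "fC E F = induced_subgraph (resonance_graph E) (clar_matchings E (hex_comps E F) (edge_comps E F))"
  unfolding fC_def clar_matchings_def ..

locale clar_data =
  fixes E :: "edge set" and HS :: "vert set" and EC :: "edge set"
  assumes lattice_edges: "e \<in> E \<Longrightarrow> lattice_edge e"
    and finite_HS: "finite HS"
    and HS_hexes: "HS \<subseteq> hexes E"
    and HS_disjoint: "c \<in> HS \<Longrightarrow> d \<in> HS \<Longrightarrow> c \<noteq> d \<Longrightarrow> cell_vertices c \<inter> cell_vertices d = {}"
    and EC_edges: "EC \<subseteq> E"
    and EC_disjoint: "e \<in> EC \<Longrightarrow> e' \<in> EC \<Longrightarrow> e \<noteq> e' \<Longrightarrow> e \<inter> e' = {}"
    and EC_HS_disjoint: "e \<in> EC \<Longrightarrow> c \<in> HS \<Longrightarrow> e \<inter> cell_vertices c = {}"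
    and covers: "v \<in> verts E \<Longrightarrow> (\<exists>c\<in>HS. v \<in> cell_vertices c) \<or> (\<exists>e\<in>EC. v \<in> e)"
begin

lemma EC_lattice_edge: "e \<in> EC \<Longrightarrow> lattice_edge e"
  using EC_edges by (intro lattice_edges) blast

lemma EC_nonempty: "e \<in> EC \<Longrightarrow> e \<noteq> {}"
  by (rule lattice_edge_nonempty[OF EC_lattice_edge])

lemma HS_cell_edge_notin_EC:
  assumes "c \<in> HS" "e \<in> cell_edges c"
  shows "e \<notin> EC"
proof
  assume "e \<in> EC"
  obtain v where "v \<in> e"
    using cell_edge_nonempty[OF assms(2)] by blast
  then show False
    using EC_HS_disjoint[OF \<open>e \<in> EC\<close> assms(1)] cell_edge_subset_vertices[OF assms(2)] by blast
qed

lemma HS_cell_edge_unique: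
  assumes "c \<in> HS" "d \<in> HS" "e \<in> cell_edges c" "e \<in> cell_edges d"
  shows "c = d"
proof (rule ccontr)
  assume "c \<noteq> d"
  obtain v where "v \<in> e"
    using cell_edge_nonempty[OF assms(3)] by blast
  then show False
    using HS_disjoint[OF assms(1,2) \<open>c \<noteq> d\<close>] cell_edge_subset_vertices assms(3,4) by blast
qed

lemma hex_edges_subset: "hex_edges HS \<subseteq> E"
  unfolding hex_edges_def using HS_hexes by (auto simp: hexes_def)

lemma comp_HS:
  assumes c: "c \<in> HS" and v: "v \<in> cell_vertices c"
  shows "comp E (EC \<union> hex_edges HS) v = cell_vertices c"
proof
  show "comp E (EC \<union> hex_edges HS) v \<subseteq> cell_vertices c"
  proof (rule comp_subset_if_closed[OF v])
    fix w w' assume w: "w \<in> cell_vertices c" and ww': "{w, w'} \<in> EC \<union> hex_edges HS"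
    show "w' \<in> cell_vertices c"
    proof (cases "{w, w'} \<in> EC")
      case True
      then show ?thesis
        using EC_HS_disjoint[OF True c] w by blast
    next
      case False
      then obtain d where d: "d \<in> HS" "{w, w'} \<in> cell_edges d"
        using ww' unfolding hex_edges_def by blast
      then have "d = c"
        using HS_disjoint[OF d(1) c] w cell_edge_subset_vertices by blast
      then show ?thesis
        using d cell_edge_subset_vertices by blast
    qed
  qed
next
  have "cell_edges c \<subseteq> E"
    using c HS_hexes by (auto simp: hexes_def)
  moreover have "cell_edges c \<subseteq> EC \<union> hex_edges HS"
    using c unfolding hex_edges_def by blast
  ultimately show "cell_vertices c \<subseteq> comp E (EC \<union> hex_edges HS) v"
    using v by (rule cell_vertices_subset_comp)
qed

lemma comp_EC:
  assumes e: "e \<in> EC" and v: "v \<in> e"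
  shows "comp E (EC \<union> hex_edges HS) v = e"
proof
  show "comp E (EC \<union> hex_edges HS) v \<subseteq> e"
  proof (rule comp_subset_if_closed[OF v])
    fix w w' assume w: "w \<in> e" and ww': "{w, w'} \<in> EC \<union> hex_edges HS"
    show "w' \<in> e"
    proof (cases "{w, w'} \<in> EC")
      case True
      then show ?thesis
        using EC_disjoint[OF True e] w by blast
    next
      case False
      then obtain d where "d \<in> HS" "{w, w'} \<in> cell_edges d"
        using ww' unfolding hex_edges_def by blast
      then show ?thesis
        using EC_HS_disjoint[OF e] w cell_edge_subset_vertices by blast
    qed
  qed
next
  obtain w where ew: "e = {v, w}"
    using lattice_edge_other_end[OF EC_lattice_edge[OF e] v] by blast
  then have "v \<in> verts E" "w \<in> verts E"
    using e EC_edges mem_vertsI by blast+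
  then have "(v, w) \<in> adj (EC \<union> hex_edges HS) (verts E)"
    by (intro adjI) (use e ew in auto)
  then show "e \<subseteq> comp E (EC \<union> hex_edges HS) v"
    unfolding comp_def using ew by auto
qed

lemma comp_edges_HS:
  assumes c: "c \<in> HS" and v: "v \<in> cell_vertices c"
  shows "comp_edges E (EC \<union> hex_edges HS) v = cell_edges c"
proof -
  have "{e \<in> EC \<union> hex_edges HS. e \<subseteq> cell_vertices c} = cell_edges c"
  proof (intro equalityI subsetI)
    fix e assume "e \<in> {e \<in> EC \<union> hex_edges HS. e \<subseteq> cell_vertices c}"
    then have e: "e \<in> EC \<union> hex_edges HS" "e \<subseteq> cell_vertices c"
      by auto
    show "e \<in> cell_edges c"
    proof (cases "e \<in> EC")
      case True
      then show ?thesis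
        using EC_HS_disjoint[OF True c] e(2) EC_nonempty by blast
    next
      case False
      then obtain d where d: "d \<in> HS" "e \<in> cell_edges d"
        using e unfolding hex_edges_def by blast
      then have "d = c"
        using HS_disjoint[OF d(1) c] e(2) cell_edge_subset_vertices cell_edge_nonempty by blast
      then show ?thesis
        using d by simp
    qed
  qed (use c cell_edge_subset_vertices in \<open>auto simp: hex_edges_def\<close>)
  then show ?thesis
    unfolding comp_edges_def comp_HS[OF assms] .
qed

lemma comp_edges_EC:
  assumes e: "e \<in> EC" and v: "v \<in> e"
  shows "comp_edges E (EC \<union> hex_edges HS) v = {e}"
proof -
  have "{e' \<in> EC \<union> hex_edges HS. e' \<subseteq> e} = {e}"
  proof (intro equalityI subsetI)
    fix e' assume "e' \<in> {e' \<in> EC \<union> hex_edges HS. e' \<subseteq> e}"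
    then have e': "e' \<in> EC \<union> hex_edges HS" "e' \<subseteq> e"
      by auto
    show "e' \<in> {e}"
    proof (cases "e' \<in> EC")
      case True
      then show ?thesis
        using EC_disjoint[OF True e] e'(2) EC_nonempty by blast
    next
      case False
      then obtain d where "d \<in> HS" "e' \<in> cell_edges d"
        using e' unfolding hex_edges_def by blast
      then show ?thesis
        using EC_HS_disjoint[OF e] e'(2) cell_edge_subset_vertices cell_edge_nonempty by blast
    qed
  qed (use e in blast)
  then show ?thesis
    unfolding comp_edges_def comp_EC[OF assms] .
qed

lemma clar_cover: "clar_cover E (EC \<union> hex_edges HS)"
  unfolding clar_cover_def
proof (intro conjI ballI)
  show "EC \<union> hex_edges HS \<subseteq> E"
    by (rule Un_least[OF EC_edges hex_edges_subset])
next
  fix v assume "v \<in> verts E"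
  show "(\<exists>c\<in>hexes E. comp_edges E (EC \<union> hex_edges HS) v = cell_edges c) \<or>
      (\<exists>e. comp_edges E (EC \<union> hex_edges HS) v = {e})"
    using covers[OF \<open>v \<in> verts E\<close>]
  proof
    assume "\<exists>c\<in>HS. v \<in> cell_vertices c"
    then obtain c where c: "c \<in> HS" "v \<in> cell_vertices c"
      by blast
    then have "comp_edges E (EC \<union> hex_edges HS) v = cell_edges c"
      by (rule comp_edges_HS)
    with c(1) HS_hexes show ?thesis
      by blast
  next
    assume "\<exists>e\<in>EC. v \<in> e"
    then obtain e where "e \<in> EC" "v \<in> e"
      by blast
    then have "comp_edges E (EC \<union> hex_edges HS) v = {e}"
      by (rule comp_edges_EC)
    then show ?thesis
      by blast
  qed
qed

lemma hex_comps_eq: "hex_comps E (EC \<union> hex_edges HS) = HS"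
proof (intro equalityI subsetI)
  fix c assume "c \<in> hex_comps E (EC \<union> hex_edges HS)"
  then obtain v where c: "c \<in> hexes E" "v \<in> verts E"
    and comp: "comp_edges E (EC \<union> hex_edges HS) v = cell_edges c"
    unfolding hex_comps_def by blast
  show "c \<in> HS"
    using covers[OF c(2)]
  proof
    assume "\<exists>d\<in>HS. v \<in> cell_vertices d"
    then obtain d where d: "d \<in> HS" "v \<in> cell_vertices d"
      by blast
    then have "cell_edges d = cell_edges c"
      using comp_edges_HS comp by simp
    then have "d = c"
      using cell_edges_subset_imp_eq hexes_is_cell c(1) d(1) HS_hexes by blast
    then show "c \<in> HS"
      using d(1) by simp
  next
    assume "\<exists>e\<in>EC. v \<in> e"
    then obtain e where "e \<in> EC" "v \<in> e"
      by blast
    then have "cell_edges c = {e}"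
      using comp_edges_EC comp by simp
    then show "c \<in> HS"
      using cell_edges_ne_singleton by blast
  qed
next
  fix c assume c: "c \<in> HS"
  have "cell_vertex c 0 \<in> verts E"
    using c HS_hexes cell_vertices_subset_verts cell_vertex_in_cell_vertices by blast
  moreover have "comp_edges E (EC \<union> hex_edges HS) (cell_vertex c 0) = cell_edges c"
    using c cell_vertex_in_cell_vertices by (rule comp_edges_HS)
  ultimately show "c \<in> hex_comps E (EC \<union> hex_edges HS)"
    unfolding hex_comps_def using c HS_hexes by blast
qed

lemma edge_comps_eq: "edge_comps E (EC \<union> hex_edges HS) = EC"
proof (intro equalityI subsetI)
  fix e assume "e \<in> edge_comps E (EC \<union> hex_edges HS)"
  then obtain v where v: "v \<in> verts E" and comp: "comp_edges E (EC \<union> hex_edges HS) v = {e}"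
    unfolding edge_comps_def by blast
  show "e \<in> EC"
    using covers[OF v]
  proof
    assume "\<exists>c\<in>HS. v \<in> cell_vertices c"
    then obtain c where "c \<in> HS" "v \<in> cell_vertices c"
      by blast
    then have "cell_edges c = {e}"
      using comp_edges_HS comp by simp
    then show "e \<in> EC"
      using cell_edges_ne_singleton by blast
  next
    assume "\<exists>e'\<in>EC. v \<in> e'"
    then obtain e' where "e' \<in> EC" "v \<in> e'"
      by blast
    then have "{e'} = {e}"
      using comp_edges_EC comp by simp
    then show "e \<in> EC"
      using \<open>e' \<in> EC\<close> by simp
  qed
next
  fix e assume e: "e \<in> EC"
  then obtain v where v: "v \<in> e"
    using EC_nonempty by blast
  then have "v \<in> verts E"
    using e EC_edges mem_vertsI by blast
  then show "e \<in> edge_comps E (EC \<union> hex_edges HS)"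
    unfolding edge_comps_def using comp_edges_EC[OF e v] by blast
qed

end

lemma hypercube_edge_iff: "{xs,ys} \<in> snd (hypercube n) \<longleftrightarrow>
   length xs = n \<and> length ys = n \<and> card {i. i < n \<and> xs ! i \<noteq> ys ! i} = 1"
proof
  assume "{xs,ys} \<in> snd (hypercube n)"
  then obtain as bs where h: "{xs,ys} = {as,bs}" "length as = n" "length bs = n"
     "card {i. i < n \<and> as ! i \<noteq> bs ! i} = 1" unfolding hypercube_def by auto
  from h(1) have "(xs = as \<and> ys = bs) \<or> (xs = bs \<and> ys = as)" by (metis doubleton_eq_iff)
  moreover have "{i. i < n \<and> bs ! i \<noteq> as ! i} = {i. i < n \<and> as ! i \<noteq> bs ! i}" by blast
  ultimately show "length xs = n \<and> length ys = n \<and> card {i. i < n \<and> xs ! i \<noteq> ys ! i} = 1"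
    using h by (elim disjE) simp_all
next
  assume "length xs = n \<and> length ys = n \<and> card {i. i < n \<and> xs ! i \<noteq> ys ! i} = 1"
  thus "{xs,ys} \<in> snd (hypercube n)" unfolding hypercube_def by auto
qed

context clar_data
begin

definition hex_list :: "vert list" where
  "hex_list = (SOME xs. set xs = HS \<and> distinct xs)"

lemma set_hex_list: "set hex_list = HS" and distinct_hex_list: "distinct hex_list"
proof -
  have "set hex_list = HS \<and> distinct hex_list"
    unfolding hex_list_def using finite_distinct_list[OF finite_HS] by (rule someI_ex)
  then show "set hex_list = HS" "distinct hex_list"
    by auto
qed

lemma length_hex_list: "length hex_list = card HS"
  using set_hex_list distinct_hex_list distinct_card by metis

lemma hex_list_nth_in_HS: "j < length hex_list \<Longrightarrow> hex_list ! j \<in> HS"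
  using set_hex_list nth_mem by blast

lemma hex_list_nth_eq_iff:
  "j < length hex_list \<Longrightarrow> k < length hex_list \<Longrightarrow> hex_list ! j = hex_list ! k \<longleftrightarrow> j = k"
  using distinct_hex_list nth_eq_iff_index_eq by blast

lemma HS_eq_hex_list_nth: "c \<in> HS \<Longrightarrow> \<exists>j<length hex_list. hex_list ! j = c"
  using set_hex_list in_set_conv_nth by metis

text \<open>A choice of one half of each hexagon in \<open>HS\<close> determines a perfect matching, and edge 1 of
  each hexagon recovers the choice.\<close>

definition matching_of :: "bool list \<Rightarrow> edge set" where
  "matching_of xs = EC \<union> (\<Union>j<length hex_list. cell_half (hex_list ! j) (xs ! j))"

definition choice_of :: "edge set \<Rightarrow> bool list" where
  "choice_of M = map (\<lambda>c. cell_edge c 1 \<in> M) hex_list"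

lemma mem_matching_of:
  "e \<in> matching_of xs \<longleftrightarrow> e \<in> EC \<or> (\<exists>j<length hex_list. e \<in> cell_half (hex_list ! j) (xs ! j))"
  unfolding matching_of_def by blast

lemma matching_of_subset: "matching_of xs \<subseteq> EC \<union> hex_edges HS"
  unfolding matching_of_def hex_edges_def using cell_half_subset hex_list_nth_in_HS by blast

lemma mem_matching_of_cell_edge:
  assumes j: "j < length hex_list" and e: "e \<in> cell_edges (hex_list ! j)"
  shows "e \<in> matching_of xs \<longleftrightarrow> e \<in> cell_half (hex_list ! j) (xs ! j)"
proof
  assume "e \<in> matching_of xs"
  moreover have "e \<notin> EC"
    using HS_cell_edge_notin_EC[OF hex_list_nth_in_HS[OF j] e] .
  ultimately obtain k where k: "k < length hex_list" "e \<in> cell_half (hex_list ! k) (xs ! k)"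
    unfolding mem_matching_of by blast
  then have "hex_list ! k = hex_list ! j"
    using HS_cell_edge_unique hex_list_nth_in_HS j e cell_half_subset by blast
  then show "e \<in> cell_half (hex_list ! j) (xs ! j)"
    using k hex_list_nth_eq_iff j by auto
qed (use j in \<open>auto simp: mem_matching_of\<close>)

lemma matching_of_edge_at_hex:
  assumes j: "j < length hex_list" and v: "v \<in> cell_vertices (hex_list ! j)"
    and e: "e \<in> matching_of xs" "v \<in> e"
  shows "e \<in> cell_half (hex_list ! j) (xs ! j)"
  using e(1) unfolding mem_matching_of
proof (elim disjE exE conjE)
  assume "e \<in> EC"
  then show ?thesis
    using EC_HS_disjoint[OF _ hex_list_nth_in_HS[OF j]] v e(2) by blast
next
  fix k assume k: "k < length hex_list" "e \<in> cell_half (hex_list ! k) (xs ! k)"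
  then have "v \<in> cell_vertices (hex_list ! k)"
    using cell_half_subset cell_edge_subset_vertices e(2) by blast
  then have "hex_list ! k = hex_list ! j"
    using HS_disjoint hex_list_nth_in_HS j k(1) v by blast
  then show ?thesis
    using k hex_list_nth_eq_iff j by auto
qed

lemma matching_of_edge_at_EC:
  assumes e0: "e0 \<in> EC" "v \<in> e0" and e: "e \<in> matching_of xs" "v \<in> e"
  shows "e = e0"
  using e(1) unfolding mem_matching_of
proof (elim disjE exE conjE)
  assume "e \<in> EC"
  then show ?thesis
    using EC_disjoint[OF _ e0(1)] e0(2) e(2) by blast
next
  fix k assume k: "k < length hex_list" "e \<in> cell_half (hex_list ! k) (xs ! k)"
  then have "v \<in> cell_vertices (hex_list ! k)"
    using cell_half_subset cell_edge_subset_vertices e(2) by blast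
  then show ?thesis
    using EC_HS_disjoint[OF e0(1) hex_list_nth_in_HS[OF k(1)]] e0(2) by blast
qed

lemma perfect_matching_matching_of: "perfect_matching E (matching_of xs)"
  unfolding perfect_matching_def
proof (intro conjI ballI)
  show "matching_of xs \<subseteq> E"
    using matching_of_subset EC_edges hex_edges_subset by blast
next
  fix v assume "v \<in> verts E"
  show "\<exists>!e. e \<in> matching_of xs \<and> v \<in> e"
    using covers[OF \<open>v \<in> verts E\<close>]
  proof
    assume "\<exists>c\<in>HS. v \<in> cell_vertices c"
    then obtain j where j: "j < length hex_list" "v \<in> cell_vertices (hex_list ! j)"
      using HS_eq_hex_list_nth by blast
    then obtain e where e: "e \<in> cell_half (hex_list ! j) (xs ! j)" "v \<in> e"
      and unique: "\<And>e'. e' \<in> cell_half (hex_list ! j) (xs ! j) \<and> v \<in> e' \<Longrightarrow> e' = e"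
      using cell_half_perfect by blast
    have "e \<in> matching_of xs"
      using e(1) j(1) unfolding mem_matching_of by blast
    then show ?thesis
      using e(2) unique matching_of_edge_at_hex[OF j] by blast
  next
    assume "\<exists>e\<in>EC. v \<in> e"
    then obtain e0 where e0: "e0 \<in> EC" "v \<in> e0"
      by blast
    then have "e0 \<in> matching_of xs"
      unfolding mem_matching_of by blast
    then show ?thesis
      using e0 matching_of_edge_at_EC[OF e0] by blast
  qed
qed

lemma alternating_matching_of:
  assumes j: "j < length hex_list"
  shows "alternating (matching_of xs) (hex_list ! j)"
  unfolding alternating_def
proof (intro allI impI)
  fix i :: nat
  have "cell_edge (hex_list ! j) i \<in> matching_of xs \<longleftrightarrow> odd i = xs ! j"
    "cell_edge (hex_list ! j) (Suc i) \<in> matching_of xs \<longleftrightarrow> odd (Suc i) = xs ! j"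
    using mem_matching_of_cell_edge[OF j cell_edge_in_cell_edges] mem_cell_half by blast+
  then show "cell_edge (hex_list ! j) i \<in> matching_of xs \<longleftrightarrow> cell_edge (hex_list ! j) (Suc i) \<notin> matching_of xs"
    by auto
qed

lemma matching_of_in_clar_matchings: "matching_of xs \<in> clar_matchings E HS EC"
proof -
  have "alternating (matching_of xs) c" if "c \<in> HS" for c
    using HS_eq_hex_list_nth[OF that] alternating_matching_of by blast
  then show ?thesis
    unfolding clar_matchings_def using perfect_matching_matching_of by (auto simp: mem_matching_of)
qed

lemma clar_matching_subset:
  assumes M: "M \<in> clar_matchings E HS EC"
  shows "M \<subseteq> EC \<union> hex_edges HS"
proof
  fix e assume e: "e \<in> M"
  have pm: "perfect_matching E M"
    using M unfolding clar_matchings_def by blast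
  then have "e \<in> E"
    using e unfolding perfect_matching_def by blast
  then obtain v where v: "v \<in> e"
    using lattice_edge_nonempty[OF lattice_edges] by blast
  then have "v \<in> verts E"
    using \<open>e \<in> E\<close> by (rule mem_vertsI[rotated])
  show "e \<in> EC \<union> hex_edges HS"
    using covers[OF \<open>v \<in> verts E\<close>]
  proof
    assume "\<exists>c\<in>HS. v \<in> cell_vertices c"
    then obtain c where c: "c \<in> HS" "v \<in> cell_vertices c"
      by blast
    moreover have "alternating M c"
      using M c(1) unfolding clar_matchings_def by blast
    ultimately have "e \<in> cell_edges c"
      using alternating_matching_edge_in_cell[OF pm _ _ e v] by blast
    then show ?thesis
      using c(1) unfolding hex_edges_def by blast
  next
    assume "\<exists>e0\<in>EC. v \<in> e0"
    then obtain e0 where "e0 \<in> EC" "v \<in> e0"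
      by blast
    moreover have "e0 \<in> M"
      using M \<open>e0 \<in> EC\<close> unfolding clar_matchings_def by blast
    ultimately show ?thesis
      using perfect_matching_edge_unique[OF pm e _ v] by blast
  qed
qed

lemma mem_cell_half_choice_of:
  assumes j: "j < length hex_list" and alt: "alternating M (hex_list ! j)"
    and e: "e \<in> cell_edges (hex_list ! j)"
  shows "e \<in> cell_half (hex_list ! j) (choice_of M ! j) \<longleftrightarrow> e \<in> M"
proof -
  obtain i where i: "e = cell_edge (hex_list ! j) i"
    using e unfolding cell_edges_eq_range by blast
  have "choice_of M ! j = (cell_edge (hex_list ! j) 1 \<in> M)"
    unfolding choice_of_def using j by simp
  then show ?thesis
    using alternating_cell_edge_iff[OF alt, of i] mem_cell_half i by auto
qed

lemma matching_of_choice_of: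
  assumes M: "M \<in> clar_matchings E HS EC"
  shows "matching_of (choice_of M) = M"
proof (rule set_eqI)
  fix e
  have "e \<in> matching_of (choice_of M) \<longleftrightarrow> e \<in> M" if "e \<in> EC"
    using that M unfolding mem_matching_of clar_matchings_def by blast
  moreover have "e \<in> matching_of (choice_of M) \<longleftrightarrow> e \<in> M" if e: "e \<in> hex_edges HS"
  proof -
    obtain j where j: "j < length hex_list" "e \<in> cell_edges (hex_list ! j)"
      using e HS_eq_hex_list_nth unfolding hex_edges_def by blast
    moreover have "alternating M (hex_list ! j)"
      using M hex_list_nth_in_HS[OF j(1)] unfolding clar_matchings_def by blast
    ultimately show ?thesis
      using mem_matching_of_cell_edge mem_cell_half_choice_of by blast
  qed
  ultimately show "e \<in> matching_of (choice_of M) \<longleftrightarrow> e \<in> M"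
    using matching_of_subset clar_matching_subset[OF M] by blast
qed

lemma choice_of_matching_of:
  assumes "length xs = length hex_list"
  shows "choice_of (matching_of xs) = xs"
proof (rule nth_equalityI)
  show "length (choice_of (matching_of xs)) = length xs"
    using assms by (simp add: choice_of_def)
next
  fix j assume "j < length (choice_of (matching_of xs))"
  then have j: "j < length hex_list"
    by (simp add: choice_of_def)
  have "choice_of (matching_of xs) ! j = (cell_edge (hex_list ! j) 1 \<in> matching_of xs)"
    unfolding choice_of_def using j by simp
  also have "\<dots> = xs ! j"
    using mem_matching_of_cell_edge[OF j cell_edge_in_cell_edges] mem_cell_half by simp
  finally show "choice_of (matching_of xs) ! j = xs ! j" .
qed

lemma bij_betw_choice_of: "bij_betw choice_of (clar_matchings E HS EC) {xs. length xs = card HS}"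
proof (rule bij_betw_byWitness[where f' = matching_of])
  show "\<forall>M\<in>clar_matchings E HS EC. matching_of (choice_of M) = M"
    using matching_of_choice_of by blast
  show "\<forall>xs\<in>{xs. length xs = card HS}. choice_of (matching_of xs) = xs"
    using choice_of_matching_of length_hex_list by simp
  show "choice_of ` clar_matchings E HS EC \<subseteq> {xs. length xs = card HS}"
    using length_hex_list by (auto simp: choice_of_def)
  show "matching_of ` {xs. length xs = card HS} \<subseteq> clar_matchings E HS EC"
    using matching_of_in_clar_matchings by blast
qed

lemma finite_clar_matchings: "finite (clar_matchings E HS EC)"
  using bij_betw_finite[OF bij_betw_choice_of] finite_lists_length_eq[of "UNIV :: bool set"] by simp

lemma card_clar_matchings: "card (clar_matchings E HS EC) = 2 ^ card HS"
  using bij_betw_same_card[OF bij_betw_choice_of] card_lists_length_eq[of "UNIV :: bool set"] by simp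

lemma Union_clar_matchings: "\<Union>(clar_matchings E HS EC) = EC \<union> hex_edges HS"
proof
  show "\<Union>(clar_matchings E HS EC) \<subseteq> EC \<union> hex_edges HS"
    using clar_matching_subset by blast
  show "EC \<union> hex_edges HS \<subseteq> \<Union>(clar_matchings E HS EC)"
  proof
    fix e assume "e \<in> EC \<union> hex_edges HS"
    then obtain b where "e \<in> matching_of (replicate (length hex_list) b)"
    proof
      assume "e \<in> EC"
      then show ?thesis
        using that unfolding mem_matching_of by blast
    next
      assume "e \<in> hex_edges HS"
      then obtain j where j: "j < length hex_list" "e \<in> cell_edges (hex_list ! j)"
        using HS_eq_hex_list_nth unfolding hex_edges_def by blast
      then obtain b where "e \<in> cell_half (hex_list ! j) b"
        using cell_edges_half_cases by blast
      then show ?thesis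
        using that mem_matching_of_cell_edge[OF j] j(1) by simp
    qed
    then show "e \<in> \<Union>(clar_matchings E HS EC)"
      using matching_of_in_clar_matchings by blast
  qed
qed

end

context clar_data
begin

lemma sym_diff_matching_of:
  "sym_diff (matching_of xs) (matching_of ys) =
     (\<Union>j\<in>{j. j < length hex_list \<and> xs ! j \<noteq> ys ! j}. cell_edges (hex_list ! j))"
proof (intro equalityI subsetI)
  fix e assume e: "e \<in> sym_diff (matching_of xs) (matching_of ys)"
  then have "e \<notin> EC" "e \<in> matching_of xs \<union> matching_of ys"
    unfolding matching_of_def by blast+
  then obtain j where j: "j < length hex_list" "e \<in> cell_edges (hex_list ! j)"
    using cell_half_subset unfolding matching_of_def by blast
  have "xs ! j \<noteq> ys ! j"
  proof
    assume "xs ! j = ys ! j"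
    then have "e \<in> matching_of xs \<longleftrightarrow> e \<in> matching_of ys"
      using mem_matching_of_cell_edge[OF j] by simp
    then show False
      using e by blast
  qed
  then show "e \<in> (\<Union>j\<in>{j. j < length hex_list \<and> xs ! j \<noteq> ys ! j}. cell_edges (hex_list ! j))"
    using j by blast
next
  fix e assume "e \<in> (\<Union>j\<in>{j. j < length hex_list \<and> xs ! j \<noteq> ys ! j}. cell_edges (hex_list ! j))"
  then obtain j where j: "j < length hex_list" "xs ! j \<noteq> ys ! j" "e \<in> cell_edges (hex_list ! j)"
    by blast
  have "e \<in> cell_half (hex_list ! j) (xs ! j) \<longleftrightarrow> e \<notin> cell_half (hex_list ! j) (ys ! j)"
    using cell_edges_half_cases[OF j(3)] cell_half_disjoint j(2) by metis
  then show "e \<in> sym_diff (matching_of xs) (matching_of ys)"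
    using mem_matching_of_cell_edge[OF j(1,3)] by blast
qed

lemma UN_hex_list_eq_cell_edges_imp_singleton:
  assumes D: "D \<subseteq> {..<length hex_list}" and c: "is_cell c"
    and eq: "(\<Union>j\<in>D. cell_edges (hex_list ! j)) = cell_edges c"
  shows "\<exists>j. D = {j}"
proof -
  have D_eq: "hex_list ! j = c" if "j \<in> D" for j
  proof -
    have "cell_edges (hex_list ! j) \<subseteq> cell_edges c"
      using eq that by blast
    moreover have "is_cell (hex_list ! j)"
      using that D hex_list_nth_in_HS HS_hexes hexes_is_cell by blast
    ultimately show ?thesis
      using cell_edges_subset_imp_eq c by blast
  qed
  have "D \<noteq> {}"
  proof
    assume "D = {}"
    have "cell_edges c = (\<Union>j\<in>D. cell_edges (hex_list ! j))"
      using eq by simp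
    also have "\<dots> = {}"
      using \<open>D = {}\<close> by (simp only: UN_empty)
    finally show False
      using card_cell_edges[of c] by simp
  qed
  then obtain j0 where j0: "j0 \<in> D"
    by blast
  have "D = {j0}"
  proof (intro equalityI subsetI)
    fix j assume j: "j \<in> D"
    then have "hex_list ! j = hex_list ! j0"
      using D_eq j0 by simp
    then show "j \<in> {j0}"
      using j j0 D hex_list_nth_eq_iff by auto
  qed (use j0 in simp)
  then show ?thesis
    by blast
qed

lemma sym_diff_matching_of_eq_cell_iff:
  "(\<exists>c\<in>hexes E. sym_diff (matching_of xs) (matching_of ys) = cell_edges c) \<longleftrightarrow>
     card {j. j < length hex_list \<and> xs ! j \<noteq> ys ! j} = 1"
  (is "?adjacent \<longleftrightarrow> card ?D = 1")
proof
  assume ?adjacent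
  then obtain c where c: "c \<in> hexes E" "(\<Union>j\<in>?D. cell_edges (hex_list ! j)) = cell_edges c"
    unfolding sym_diff_matching_of by blast
  have "\<exists>j. ?D = {j}"
    by (rule UN_hex_list_eq_cell_edges_imp_singleton[OF _ hexes_is_cell[OF c(1)] c(2)]) auto
  then obtain j where D: "?D = {j}"
    by blast
  show "card ?D = 1"
    unfolding D by simp
next
  assume "card ?D = 1"
  then obtain j where "?D = {j}"
    by (rule card_1_singletonE)
  then have "sym_diff (matching_of xs) (matching_of ys) = cell_edges (hex_list ! j)"
    "hex_list ! j \<in> hexes E"
    using sym_diff_matching_of[of xs ys] hex_list_nth_in_HS HS_hexes by auto
  then show ?adjacent
    by blast
qed

lemma clar_matchings_hypercube:
  "graph_iso (induced_subgraph (resonance_graph E) (clar_matchings E HS EC)) (hypercube (card HS))"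
  unfolding graph_iso_def
proof (intro exI conjI ballI)
  let ?G = "induced_subgraph (resonance_graph E) (clar_matchings E HS EC)"
  show "bij_betw choice_of (fst ?G) (fst (hypercube (card HS)))"
    using bij_betw_choice_of unfolding induced_subgraph_def hypercube_def by simp
  fix M M' assume "M \<in> fst ?G" "M' \<in> fst ?G"
  then have M: "M \<in> clar_matchings E HS EC" and M': "M' \<in> clar_matchings E HS EC"
    unfolding induced_subgraph_def by auto
  then have pm: "perfect_matching E M" "perfect_matching E M'"
    unfolding clar_matchings_def by auto
  have "{M, M'} \<in> snd ?G \<longleftrightarrow> (\<exists>c\<in>hexes E. sym_diff M M' = cell_edges c)"
    using induced_subgraph_edge_iff[OF M M'] resonance_edge_iff pm by blast
  also have "\<dots> \<longleftrightarrow>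
      (\<exists>c\<in>hexes E. sym_diff (matching_of (choice_of M)) (matching_of (choice_of M')) = cell_edges c)"
    using matching_of_choice_of[OF M] matching_of_choice_of[OF M'] by simp
  also have "\<dots> \<longleftrightarrow> card {j. j < length hex_list \<and> choice_of M ! j \<noteq> choice_of M' ! j} = 1"
    by (rule sym_diff_matching_of_eq_cell_iff)
  also have "\<dots> \<longleftrightarrow> {choice_of M, choice_of M'} \<in> snd (hypercube (card HS))"
    using hypercube_edge_iff length_hex_list by (simp add: choice_of_def)
  finally show "{M, M'} \<in> snd ?G \<longleftrightarrow> {choice_of M, choice_of M'} \<in> snd (hypercube (card HS))" .
qed

end

section \<open>Clar covers as Clar data\<close>

lemma finite_hexes:
  assumes "finite E" and lattice: "\<And>e. e \<in> E \<Longrightarrow> lattice_edge e"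
  shows "finite (hexes E)"
proof -
  have "finite e" if "e \<in> E" for e
    using lattice_edge_doubleton[OF lattice[OF that]] by auto
  then have "finite (verts E)"
    using assms(1) unfolding verts_def by blast
  moreover have "hexes E \<subseteq> verts E"
  proof
    fix c assume c: "c \<in> hexes E"
    have "cell_vertex c 0 = c"
      by (cases c) simp
    then show "c \<in> verts E"
      using cell_vertices_subset_verts[OF c] cell_vertex_in_cell_vertices[of c 0] by auto
  qed
  ultimately show ?thesis
    using finite_subset by blast
qed

lemma hex_comps_subset_hexes: "hex_comps E F \<subseteq> hexes E"
  unfolding hex_comps_def by blast

locale clar_cover_of =
  fixes E :: "edge set" and F :: "edge set"
  assumes finite_E: "finite E" and lattice_edges: "e \<in> E \<Longrightarrow> lattice_edge e"
    and is_clar_cover: "clar_cover E F"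
begin

lemma subset_E: "F \<subseteq> E"
  using is_clar_cover unfolding clar_cover_def by blast

lemma comp_edges_cases:
  "v \<in> verts E \<Longrightarrow> (\<exists>c\<in>hexes E. comp_edges E F v = cell_edges c) \<or> (\<exists>e. comp_edges E F v = {e})"
  using is_clar_cover unfolding clar_cover_def by blast

lemma F_edge_nonempty: "e \<in> F \<Longrightarrow> e \<noteq> {}"
  using subset_E by (intro lattice_edge_nonempty lattice_edges) blast

lemma mem_own_comp_edges:
  assumes v: "v \<in> verts E"
  shows "v \<in> \<Union>(comp_edges E F v)"
proof -
  have "comp_edges E F v \<noteq> {}"
    using comp_edges_cases[OF v]
  proof (elim disjE bexE exE)
    fix c assume "comp_edges E F v = cell_edges c"
    then show ?thesis
      using cell_edge_in_cell_edges[of c 0] by auto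
  qed auto
  then obtain e where "e \<in> comp_edges E F v"
    by blast
  moreover have "e \<noteq> {}"
    using calculation comp_edges_subset F_edge_nonempty by blast
  ultimately show ?thesis
    by (rule mem_Union_comp_edges)
qed

lemma comp_edges_hex_comp:
  assumes "c \<in> hex_comps E F" "u \<in> cell_vertices c"
  shows "comp_edges E F u = cell_edges c"
proof -
  obtain v where "comp_edges E F v = cell_edges c"
    using assms(1) unfolding hex_comps_def by blast
  moreover have "u \<in> \<Union>(cell_edges c)"
    using assms(2) cell_vertices_eq_Union by blast
  ultimately show ?thesis
    using comp_edges_eq_if_mem by metis
qed

lemma comp_edges_edge_comp:
  assumes "e \<in> edge_comps E F" "u \<in> e"
  shows "comp_edges E F u = {e}"
proof -
  obtain v where "comp_edges E F v = {e}"
    using assms(1) unfolding edge_comps_def by blast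
  moreover have "u \<in> \<Union>{e}"
    using assms(2) by blast
  ultimately show ?thesis
    using comp_edges_eq_if_mem by metis
qed

lemma covers_comps:
  assumes v: "v \<in> verts E"
  shows "(\<exists>c\<in>hex_comps E F. v \<in> cell_vertices c) \<or> (\<exists>e\<in>edge_comps E F. v \<in> e)"
  using comp_edges_cases[OF v]
proof
  assume "\<exists>c\<in>hexes E. comp_edges E F v = cell_edges c"
  then obtain c where c: "c \<in> hexes E" "comp_edges E F v = cell_edges c"
    by blast
  then have "c \<in> hex_comps E F"
    unfolding hex_comps_def using v by blast
  moreover have "v \<in> cell_vertices c"
    using mem_own_comp_edges[OF v] c(2) cell_vertices_eq_Union by simp
  ultimately show ?thesis
    by blast
next
  assume "\<exists>e. comp_edges E F v = {e}"
  then obtain e where e: "comp_edges E F v = {e}"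
    by blast
  then have "e \<in> edge_comps E F"
    unfolding edge_comps_def using v by blast
  moreover have "v \<in> e"
    using mem_own_comp_edges[OF v] e by simp
  ultimately show ?thesis
    by blast
qed

lemma edge_comps_subset: "edge_comps E F \<subseteq> E"
proof
  fix e assume "e \<in> edge_comps E F"
  then obtain v where "comp_edges E F v = {e}"
    unfolding edge_comps_def by blast
  then show "e \<in> E"
    using comp_edges_subset[of E F v] subset_E by auto
qed

lemma hex_comps_disjoint:
  assumes c: "c \<in> hex_comps E F" and d: "d \<in> hex_comps E F" and "c \<noteq> d"
  shows "cell_vertices c \<inter> cell_vertices d = {}"
proof (rule ccontr)
  assume "cell_vertices c \<inter> cell_vertices d \<noteq> {}"
  then obtain u where u: "u \<in> cell_vertices c" "u \<in> cell_vertices d"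
    by blast
  have "cell_edges c = cell_edges d"
    using comp_edges_hex_comp[OF c u(1)] comp_edges_hex_comp[OF d u(2)] by simp
  moreover have "is_cell c" "is_cell d"
    using c d hex_comps_subset_hexes hexes_is_cell by blast+
  ultimately show False
    using cell_edges_subset_imp_eq \<open>c \<noteq> d\<close> by blast
qed

lemma edge_comps_disjoint:
  assumes e: "e \<in> edge_comps E F" and e': "e' \<in> edge_comps E F" and "e \<noteq> e'"
  shows "e \<inter> e' = {}"
proof (rule ccontr)
  assume "e \<inter> e' \<noteq> {}"
  then obtain u where u: "u \<in> e" "u \<in> e'"
    by blast
  have "{e} = {e'}"
    using comp_edges_edge_comp[OF e u(1)] comp_edges_edge_comp[OF e' u(2)] by simp
  then show False
    using \<open>e \<noteq> e'\<close> by simp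
qed

lemma edge_comps_hex_comps_disjoint:
  assumes e: "e \<in> edge_comps E F" and c: "c \<in> hex_comps E F"
  shows "e \<inter> cell_vertices c = {}"
proof (rule ccontr)
  assume "e \<inter> cell_vertices c \<noteq> {}"
  then obtain u where u: "u \<in> e" "u \<in> cell_vertices c"
    by blast
  have "cell_edges c = {e}"
    using comp_edges_edge_comp[OF e u(1)] comp_edges_hex_comp[OF c u(2)] by simp
  then show False
    using cell_edges_ne_singleton by blast
qed

sublocale comps: clar_data E "hex_comps E F" "edge_comps E F"
proof
  show "finite (hex_comps E F)"
    by (rule finite_subset[OF hex_comps_subset_hexes finite_hexes[OF finite_E lattice_edges]])
qed (fact lattice_edges hex_comps_subset_hexes hex_comps_disjoint edge_comps_subset edge_comps_disjoint
  edge_comps_hex_comps_disjoint covers_comps)+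

lemma eq_clar_edges: "F = edge_comps E F \<union> hex_edges (hex_comps E F)"
proof (intro equalityI subsetI)
  fix e assume e: "e \<in> F"
  then obtain v w where ew: "e = {v, w}"
    using subset_E lattice_edges lattice_edge_doubleton by blast
  then have vw: "v \<in> verts E" "w \<in> verts E"
    using e subset_E mem_vertsI by blast+
  then have "(v, w) \<in> adj F (verts E)"
    by (intro adjI) (use e ew in simp)
  then have "e \<in> comp_edges E F v"
    unfolding comp_edges_def comp_def using e ew by auto
  show "e \<in> edge_comps E F \<union> hex_edges (hex_comps E F)"
    using comp_edges_cases[OF vw(1)]
  proof (elim disjE bexE exE)
    fix c assume "c \<in> hexes E" "comp_edges E F v = cell_edges c"
    then show ?thesis
      using \<open>e \<in> comp_edges E F v\<close> vw(1) unfolding hex_comps_def hex_edges_def by blast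
  next
    fix e' assume "comp_edges E F v = {e'}"
    then show ?thesis
      using \<open>e \<in> comp_edges E F v\<close> vw(1) unfolding edge_comps_def by blast
  qed
next
  fix e assume "e \<in> edge_comps E F \<union> hex_edges (hex_comps E F)"
  then obtain v where "e \<in> comp_edges E F v"
    unfolding edge_comps_def hex_comps_def hex_edges_def by blast
  then show "e \<in> F"
    using comp_edges_subset by blast
qed

end

section \<open>Induced hypercubes of the resonance graph\<close>

text \<open>Otherwise the at least five edges of \<open>c\<close> outside \<open>a\<close> would lie in \<open>b\<close> or \<open>d\<close>, while \<open>c\<close> shares
  at most one edge with each of them.\<close>

lemma sym_diff_cell_edges_eq_imp_eq:
  assumes cells: "is_cell a" "is_cell b" "is_cell c" "is_cell d" and "a \<noteq> b"
    and eq: "sym_diff (cell_edges a) (cell_edges c) = sym_diff (cell_edges b) (cell_edges d)"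
    and ne: "sym_diff (cell_edges a) (cell_edges c) \<noteq> {}"
  shows "c = b"
proof (rule ccontr)
  assume "c \<noteq> b"
  have "c \<noteq> a"
    using ne by blast
  show False
  proof (cases "c = d")
    case True
    then have "sym_diff (cell_edges c) (cell_edges a) = sym_diff (cell_edges c) (cell_edges b)"
      using eq by blast
    then have "cell_edges a = cell_edges b"
      by (rule sym_diff_left_cancel)
    then show False
      using cell_edges_subset_imp_eq cells \<open>a \<noteq> b\<close> by blast
  next
    case False
    have sub: "cell_edges c - cell_edges a \<subseteq> (cell_edges c \<inter> cell_edges b) \<union> (cell_edges c \<inter> cell_edges d)"
      using eq by blast
    have "card (cell_edges c \<inter> cell_edges a) \<le> 1"
      using card_common_cell_edges cells \<open>c \<noteq> a\<close> by blast
    then have "5 \<le> card (cell_edges c - cell_edges a)"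
      using card_Diff_subset_Int[of "cell_edges c" "cell_edges a"] finite_cell_edges card_cell_edges[of c]
      by simp
    also have "\<dots> \<le> card ((cell_edges c \<inter> cell_edges b) \<union> (cell_edges c \<inter> cell_edges d))"
      using card_mono[OF _ sub] finite_cell_edges by blast
    also have "\<dots> \<le> card (cell_edges c \<inter> cell_edges b) + card (cell_edges c \<inter> cell_edges d)"
      by (rule card_Un_le)
    also have "\<dots> \<le> 2"
      using card_common_cell_edges cells \<open>c \<noteq> b\<close> \<open>c \<noteq> d\<close> by (metis add_mono one_add_one)
    finally show False
      by simp
  qed
qed

lemma resonance_square_opposite:
  assumes "is_cell a" "is_cell b" "is_cell c" "is_cell d" "a \<noteq> b"
    and "sym_diff M A = cell_edges a" "sym_diff M B = cell_edges b"
    and "sym_diff A N = cell_edges c" "sym_diff B N = cell_edges d" and "N \<noteq> M"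
  shows "c = b"
proof -
  have "sym_diff M N = sym_diff (cell_edges a) (cell_edges c)"
    "sym_diff M N = sym_diff (cell_edges b) (cell_edges d)"
    using assms(6-9) by blast+
  moreover have "sym_diff M N \<noteq> {}"
    using \<open>N \<noteq> M\<close> by blast
  ultimately show ?thesis
    using sym_diff_cell_edges_eq_imp_eq[OF assms(1-5)] by simp
qed

locale resonance_hypercube =
  fixes E :: "edge set" and W :: "edge set set" and n :: nat and \<phi> :: "edge set \<Rightarrow> bool list"
  assumes lattice_edges: "e \<in> E \<Longrightarrow> lattice_edge e"
    and perfect_matchings: "M \<in> W \<Longrightarrow> perfect_matching E M"
    and bij: "bij_betw \<phi> W {xs. length xs = n}"
    and resonance_iff_hypercube:
      "M \<in> W \<Longrightarrow> M' \<in> W \<Longrightarrow> {M, M'} \<in> snd (resonance_graph E) \<longleftrightarrow> {\<phi> M, \<phi> M'} \<in> snd (hypercube n)"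
begin

definition indicator_list :: "nat set \<Rightarrow> bool list" where
  "indicator_list S = map (\<lambda>i. i \<in> S) [0..<n]"

definition cube_vertex :: "nat set \<Rightarrow> edge set" where
  "cube_vertex S = inv_into W \<phi> (indicator_list S)"

lemma indicator_list_in_image: "indicator_list S \<in> \<phi> ` W"
  using bij_betw_imp_surj_on[OF bij] by (simp add: indicator_list_def)

lemma cube_vertex_in_W: "cube_vertex S \<in> W"
  unfolding cube_vertex_def using indicator_list_in_image by (rule inv_into_into)

lemma perfect_matching_cube_vertex: "perfect_matching E (cube_vertex S)"
  using cube_vertex_in_W by (rule perfect_matchings)

lemma \<phi>_cube_vertex: "\<phi> (cube_vertex S) = indicator_list S"
  unfolding cube_vertex_def using indicator_list_in_image by (rule f_inv_into_f)

lemma cube_vertex_inj: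
  assumes "S \<subseteq> {..<n}" "T \<subseteq> {..<n}" "cube_vertex S = cube_vertex T"
  shows "S = T"
proof -
  have "indicator_list S = indicator_list T"
    using assms(3) \<phi>_cube_vertex by metis
  then have "i \<in> S \<longleftrightarrow> i \<in> T" if "i < n" for i
    using that unfolding indicator_list_def by (metis add_0 diff_zero length_upt nth_map nth_upt)
  then show ?thesis
    using assms(1,2) by blast
qed

lemma eq_cube_vertex: "M \<in> W \<Longrightarrow> M = cube_vertex {i. i < n \<and> \<phi> M ! i}"
proof -
  assume M: "M \<in> W"
  then have "length (\<phi> M) = n"
    using bij_betw_imp_surj_on[OF bij] by auto
  then have "indicator_list {i. i < n \<and> \<phi> M ! i} = \<phi> M"
    by (intro nth_equalityI) (auto simp: indicator_list_def)
  then show ?thesis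
    unfolding cube_vertex_def using bij_betw_inv_into_left[OF bij M] by simp
qed

lemma cube_vertices_adjacent:
  assumes "S \<subseteq> {..<n}" "T \<subseteq> {..<n}" "card (sym_diff S T) = 1"
  shows "\<exists>c\<in>hexes E. sym_diff (cube_vertex S) (cube_vertex T) = cell_edges c"
proof -
  have "{i. i < n \<and> indicator_list S ! i \<noteq> indicator_list T ! i} = sym_diff S T"
    using assms(1,2) by (auto simp: indicator_list_def)
  then have "{indicator_list S, indicator_list T} \<in> snd (hypercube n)"
    using assms(3) by (simp add: hypercube_edge_iff indicator_list_def)
  then have "{cube_vertex S, cube_vertex T} \<in> snd (resonance_graph E)"
    using resonance_iff_hypercube[OF cube_vertex_in_W cube_vertex_in_W] \<phi>_cube_vertex by simp
  then show ?thesis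
    by (simp add: resonance_edge_iff)
qed

definition base :: "edge set" where
  "base = cube_vertex {}"

definition flip_hexagon :: "nat \<Rightarrow> vert" where
  "flip_hexagon i = (SOME c. c \<in> hexes E \<and> sym_diff base (cube_vertex {i}) = cell_edges c)"

lemma flip_hexagon:
  assumes "i < n"
  shows "flip_hexagon i \<in> hexes E" "sym_diff base (cube_vertex {i}) = cell_edges (flip_hexagon i)"
proof -
  have "\<exists>c. c \<in> hexes E \<and> sym_diff base (cube_vertex {i}) = cell_edges c"
    using cube_vertices_adjacent[of "{}" "{i}"] assms unfolding base_def by auto
  then have "flip_hexagon i \<in> hexes E \<and> sym_diff base (cube_vertex {i}) = cell_edges (flip_hexagon i)"
    unfolding flip_hexagon_def by (rule someI_ex)
  then show "flip_hexagon i \<in> hexes E" "sym_diff base (cube_vertex {i}) = cell_edges (flip_hexagon i)"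
    by auto
qed

lemma is_cell_flip_hexagon: "i < n \<Longrightarrow> is_cell (flip_hexagon i)"
  using flip_hexagon(1) hexes_is_cell by blast

lemma perfect_matching_base: "perfect_matching E base"
  unfolding base_def by (rule perfect_matching_cube_vertex)

lemma alternating_base: "i < n \<Longrightarrow> alternating base (flip_hexagon i)"
  using alternating_if_sym_diff_cell[OF perfect_matching_base perfect_matching_cube_vertex]
    flip_hexagon(2) by blast

lemma flip_hexagon_neq:
  assumes "i < n" "j < n" "i \<noteq> j"
  shows "flip_hexagon i \<noteq> flip_hexagon j"
proof
  assume "flip_hexagon i = flip_hexagon j"
  then have "cube_vertex {i} = cube_vertex {j}"
    using flip_hexagon(2)[OF assms(1)] flip_hexagon(2)[OF assms(2)] sym_diff_left_cancel by metis
  then show False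
    using cube_vertex_inj[of "{i}" "{j}"] assms by auto
qed

lemma sym_diff_cube_vertex_pair:
  assumes i: "i < n" and j: "j < n" and "i \<noteq> j"
  shows "sym_diff (cube_vertex {i}) (cube_vertex {i, j}) = cell_edges (flip_hexagon j)"
proof -
  have "card (sym_diff {i} {i, j}) = 1" "card (sym_diff {j} {i, j}) = 1"
    using \<open>i \<noteq> j\<close> by (auto simp: insert_Diff_if)
  then obtain c d where c: "c \<in> hexes E" "sym_diff (cube_vertex {i}) (cube_vertex {i, j}) = cell_edges c"
    and d: "d \<in> hexes E" "sym_diff (cube_vertex {j}) (cube_vertex {i, j}) = cell_edges d"
    using cube_vertices_adjacent[of "{i}" "{i, j}"] cube_vertices_adjacent[of "{j}" "{i, j}"] i j
    by auto
  have "cube_vertex {i, j} \<noteq> base"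
    using cube_vertex_inj[of "{i, j}" "{}"] i j unfolding base_def by auto
  then have "c = flip_hexagon j"
    using resonance_square_opposite[OF is_cell_flip_hexagon[OF i] is_cell_flip_hexagon[OF j]
        hexes_is_cell[OF c(1)] hexes_is_cell[OF d(1)] flip_hexagon_neq[OF assms]
        flip_hexagon(2)[OF i] flip_hexagon(2)[OF j] c(2) d(2)] by simp
  then show ?thesis
    using c(2) by simp
qed

text \<open>At a common vertex, the edges of \<open>base\<close> and of \<open>cube_vertex {i}\<close> would lie on both hexagons,
  as both matchings alternate on both; they differ because hexagon \<open>i\<close> is flipped. But distinct
  cells do not share two edges.\<close>

lemma flip_hexagons_disjoint:
  assumes i: "i < n" and j: "j < n" and "i \<noteq> j"
  shows "cell_vertices (flip_hexagon i) \<inter> cell_vertices (flip_hexagon j) = {}"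
proof (rule ccontr)
  let ?A = "cube_vertex {i}"
  assume "cell_vertices (flip_hexagon i) \<inter> cell_vertices (flip_hexagon j) \<noteq> {}"
  then obtain u where u: "u \<in> cell_vertices (flip_hexagon i)" "u \<in> cell_vertices (flip_hexagon j)"
    by blast
  have "sym_diff ?A base = cell_edges (flip_hexagon i)"
    using flip_hexagon(2)[OF i] by blast
  then have A_alt: "alternating ?A (flip_hexagon i)" "alternating ?A (flip_hexagon j)"
    using alternating_if_sym_diff_cell[OF perfect_matching_cube_vertex perfect_matching_base]
      alternating_if_sym_diff_cell[OF perfect_matching_cube_vertex perfect_matching_cube_vertex
        sym_diff_cube_vertex_pair[OF assms]]
    by blast+
  have "u \<in> verts E"
    using cell_vertices_subset_verts[OF flip_hexagon(1)[OF i]] u(1) by blast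
  then obtain m m' where m: "m \<in> base" "u \<in> m" and m': "m' \<in> ?A" "u \<in> m'"
    using perfect_matching_edge_exists[OF perfect_matching_base] perfect_matching_edge_exists[OF perfect_matching_cube_vertex]
    by metis
  have "m \<in> cell_edges (flip_hexagon i)" "m \<in> cell_edges (flip_hexagon j)"
    using alternating_matching_edge_in_cell[OF perfect_matching_base alternating_base _ m] i j u by auto
  moreover have "m' \<in> cell_edges (flip_hexagon i)" "m' \<in> cell_edges (flip_hexagon j)"
    using alternating_matching_edge_in_cell[OF perfect_matching_cube_vertex A_alt(1) u(1) m']
      alternating_matching_edge_in_cell[OF perfect_matching_cube_vertex A_alt(2) u(2) m'] by auto
  moreover have "m \<noteq> m'"
    using m(1) m'(1) calculation(1) flip_hexagon(2)[OF i] by blast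
  ultimately have "flip_hexagon i = flip_hexagon j"
    using cell_eq_if_two_common_edges is_cell_flip_hexagon i j by blast
  then show False
    using flip_hexagon_neq[OF assms] by blast
qed

end

lemma set_empty_singleton_or_two_cases:
  obtains "S = {}" | i where "S = {i}" | i j T where "S = insert i (insert j T)" "i \<noteq> j" "i \<notin> T" "j \<notin> T"
proof (cases "S = {}")
  case False
  then obtain i where i: "i \<in> S"
    by blast
  show thesis
  proof (cases "S - {i} = {}")
    case True
    then have "S = {i}"
      using i by blast
    then show thesis
      by (rule that(2))
  next
    case False
    then obtain j where j: "j \<in> S" "j \<noteq> i"
      by blast
    have "S = insert i (insert j (S - {i, j}))"
      using i j by blast
    then show thesis
      by (rule that(3)) (use j in auto)
  qed
qed (rule that(1))

context resonance_hypercube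
begin

definition flip_edges :: "nat set \<Rightarrow> edge set" where
  "flip_edges S = (\<Union>i\<in>S. cell_edges (flip_hexagon i))"

lemma flip_edges_insert:
  assumes "i < n" "T \<subseteq> {..<n}" "i \<notin> T"
  shows "flip_edges (insert i T) = sym_diff (flip_edges T) (cell_edges (flip_hexagon i))"
proof -
  have "cell_edges (flip_hexagon i) \<inter> flip_edges T = {}"
  proof (rule ccontr)
    assume "cell_edges (flip_hexagon i) \<inter> flip_edges T \<noteq> {}"
    then obtain e k where e: "e \<in> cell_edges (flip_hexagon i)" "k \<in> T" "e \<in> cell_edges (flip_hexagon k)"
      unfolding flip_edges_def by blast
    obtain u where "u \<in> e"
      using cell_edge_nonempty[OF e(1)] by blast
    then have "u \<in> cell_vertices (flip_hexagon i)" "u \<in> cell_vertices (flip_hexagon k)"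
      using e cell_edge_subset_vertices by blast+
    moreover have "k < n" "k \<noteq> i"
      using e(2) assms by auto
    ultimately show False
      using flip_hexagons_disjoint assms(1) by blast
  qed
  then show ?thesis
    unfolding flip_edges_def by blast
qed

text \<open>The cube vertex \<open>insert i (insert j T)\<close> closes a 4-cycle with the three vertices below it,
  so by \<open>resonance_square_opposite\<close> it is reached by flipping the same two hexagons.\<close>

lemma cube_vertex_square:
  assumes T: "T \<subseteq> {..<n}" and ij: "i < n" "j < n" "i \<noteq> j" "i \<notin> T" "j \<notin> T"
    and IH: "cube_vertex T = sym_diff base (flip_edges T)"
      "cube_vertex (insert i T) = sym_diff base (flip_edges (insert i T))"
      "cube_vertex (insert j T) = sym_diff base (flip_edges (insert j T))"
  shows "cube_vertex (insert i (insert j T)) = sym_diff base (flip_edges (insert i (insert j T)))"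
proof -
  let ?S = "insert i (insert j T)"
  have subsets: "insert i T \<subseteq> {..<n}" "insert j T \<subseteq> {..<n}" "?S \<subseteq> {..<n}"
    using T ij by auto
  have flips: "sym_diff (cube_vertex T) (cube_vertex (insert j T)) = cell_edges (flip_hexagon j)"
    "sym_diff (cube_vertex T) (cube_vertex (insert i T)) = cell_edges (flip_hexagon i)"
    using IH flip_edges_insert[OF ij(2) T ij(5)] flip_edges_insert[OF ij(1) T ij(4)] by blast+
  have "card (sym_diff (insert j T) ?S) = 1" "card (sym_diff (insert i T) ?S) = 1"
    using ij by (auto simp: insert_Diff_if)
  then obtain c d where c: "c \<in> hexes E" "sym_diff (cube_vertex (insert j T)) (cube_vertex ?S) = cell_edges c"
    and d: "d \<in> hexes E" "sym_diff (cube_vertex (insert i T)) (cube_vertex ?S) = cell_edges d"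
    using cube_vertices_adjacent subsets by metis
  have "cube_vertex ?S \<noteq> cube_vertex T"
    using cube_vertex_inj[OF subsets(3) T] ij(1,4) by blast
  then have "c = flip_hexagon i"
    by (rule resonance_square_opposite[OF is_cell_flip_hexagon[OF ij(2)] is_cell_flip_hexagon[OF ij(1)]
        hexes_is_cell[OF c(1)] hexes_is_cell[OF d(1)] flip_hexagon_neq[OF ij(2,1) ij(3)[symmetric]]
        flips c(2) d(2)])
  then have "cube_vertex ?S = sym_diff (cube_vertex (insert j T)) (cell_edges (flip_hexagon i))"
    using c(2) by blast
  also have "\<dots> = sym_diff base (flip_edges ?S)"
    using IH(3) flip_edges_insert[of i "insert j T"] ij subsets(2) by blast
  finally show ?thesis .
qed

lemma cube_vertex_eq_sym_diff_base: "S \<subseteq> {..<n} \<Longrightarrow> cube_vertex S = sym_diff base (flip_edges S)"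
proof (induction "card S" arbitrary: S rule: less_induct)
  case less
  have fin: "finite S"
    using less.prems finite_subset by blast
  consider (empty) "S = {}" | (single) i where "S = {i}"
    | (two) i j T where "S = insert i (insert j T)" "i \<noteq> j" "i \<notin> T" "j \<notin> T"
    by (rule set_empty_singleton_or_two_cases)
  then show ?case
  proof cases
    case empty
    then show ?thesis
      unfolding base_def flip_edges_def by simp
  next
    case (single i)
    then have "i < n"
      using less.prems by blast
    then show ?thesis
      using flip_hexagon(2)[of i] single unfolding flip_edges_def by blast
  next
    case (two i j T)
    have card: "card T < card S" "card (insert i T) < card S" "card (insert j T) < card S"
      using fin two by (auto simp: card_insert_if)
    have sub: "T \<subseteq> {..<n}" "insert i T \<subseteq> {..<n}" "insert j T \<subseteq> {..<n}"
      using less.prems two(1) by auto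
    have "i < n" "j < n"
      using less.prems two(1) by auto
    then have "cube_vertex (insert i (insert j T)) = sym_diff base (flip_edges (insert i (insert j T)))"
      using cube_vertex_square[OF sub(1) _ _ two(2-4)] less.hyps[OF card(1) sub(1)]
        less.hyps[OF card(2) sub(2)] less.hyps[OF card(3) sub(3)] by blast
    then show ?thesis
      using two(1) by simp
  qed
qed

lemma sym_diff_cube_vertex_insert:
  assumes "T \<subseteq> {..<n}" "i < n" "i \<notin> T"
  shows "sym_diff (cube_vertex T) (cube_vertex (insert i T)) = cell_edges (flip_hexagon i)"
  using cube_vertex_eq_sym_diff_base[OF assms(1)] cube_vertex_eq_sym_diff_base[of "insert i T"]
    flip_edges_insert[OF assms(2,1,3)] assms by blast

end

context resonance_hypercube
begin

definition flip_hexagons :: "vert set" where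
  "flip_hexagons = flip_hexagon ` {..<n}"

definition base_edges :: "edge set" where
  "base_edges = base - flip_edges {..<n}"

lemma card_flip_hexagons: "card flip_hexagons = n"
proof -
  have "inj_on flip_hexagon {..<n}"
    using flip_hexagon_neq by (auto simp: inj_on_def)
  then show ?thesis
    unfolding flip_hexagons_def by (simp add: card_image)
qed

lemma base_edge_disjoint_flip_hexagon:
  assumes e: "e \<in> base_edges" and i: "i < n"
  shows "e \<inter> cell_vertices (flip_hexagon i) = {}"
proof (rule ccontr)
  assume "e \<inter> cell_vertices (flip_hexagon i) \<noteq> {}"
  then obtain u where "u \<in> e" "u \<in> cell_vertices (flip_hexagon i)"
    by blast
  then have "e \<in> cell_edges (flip_hexagon i)"
    using alternating_matching_edge_in_cell[OF perfect_matching_base alternating_base[OF i]] e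
    unfolding base_edges_def by blast
  then show False
    using e i unfolding base_edges_def flip_edges_def by blast
qed

sublocale flips: clar_data E flip_hexagons base_edges
proof
  show "e \<in> E \<Longrightarrow> lattice_edge e" for e
    by (rule lattice_edges)
  show "finite flip_hexagons"
    unfolding flip_hexagons_def by simp
  show "flip_hexagons \<subseteq> hexes E"
    unfolding flip_hexagons_def using flip_hexagon(1) by blast
  show "base_edges \<subseteq> E"
    unfolding base_edges_def using perfect_matching_base unfolding perfect_matching_def by blast
next
  fix c d assume "c \<in> flip_hexagons" "d \<in> flip_hexagons" "c \<noteq> d"
  then show "cell_vertices c \<inter> cell_vertices d = {}"
    unfolding flip_hexagons_def using flip_hexagons_disjoint by blast
next
  fix e e' assume "e \<in> base_edges" "e' \<in> base_edges" "e \<noteq> e'"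
  then show "e \<inter> e' = {}"
    using perfect_matching_edge_unique[OF perfect_matching_base] unfolding base_edges_def by blast
next
  fix e c assume "e \<in> base_edges" "c \<in> flip_hexagons"
  then show "e \<inter> cell_vertices c = {}"
    unfolding flip_hexagons_def using base_edge_disjoint_flip_hexagon by blast
next
  fix v assume "v \<in> verts E"
  then obtain e where e: "e \<in> base" "v \<in> e"
    using perfect_matching_edge_exists[OF perfect_matching_base] by blast
  show "(\<exists>c\<in>flip_hexagons. v \<in> cell_vertices c) \<or> (\<exists>e\<in>base_edges. v \<in> e)"
  proof (cases "e \<in> flip_edges {..<n}")
    case True
    then obtain i where "i < n" "e \<in> cell_edges (flip_hexagon i)"
      unfolding flip_edges_def by blast
    then show ?thesis
      using cell_edge_subset_vertices e(2) unfolding flip_hexagons_def by blast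
  next
    case False
    then show ?thesis
      using e unfolding base_edges_def by blast
  qed
qed

lemma W_subset_clar_matchings: "W \<subseteq> clar_matchings E flip_hexagons base_edges"
proof
  fix M assume M: "M \<in> W"
  define S where "S = {i. i < n \<and> \<phi> M ! i}"
  have S: "S \<subseteq> {..<n}" and MS: "M = cube_vertex S"
    using eq_cube_vertex[OF M] unfolding S_def by auto
  have "alternating M (flip_hexagon i)" if i: "i < n" for i
  proof (cases "i \<in> S")
    case True
    have "sym_diff (cube_vertex (S - {i})) (cube_vertex (insert i (S - {i}))) = cell_edges (flip_hexagon i)"
      using sym_diff_cube_vertex_insert[of "S - {i}" i] S i by blast
    then have "sym_diff M (cube_vertex (S - {i})) = cell_edges (flip_hexagon i)"
      using True MS by (simp add: insert_absorb sym_diff_commute)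
    then show ?thesis
      using alternating_if_sym_diff_cell[OF perfect_matchings[OF M] perfect_matching_cube_vertex] by blast
  next
    case False
    then have "sym_diff M (cube_vertex (insert i S)) = cell_edges (flip_hexagon i)"
      using sym_diff_cube_vertex_insert[OF S i] MS by simp
    then show ?thesis
      using alternating_if_sym_diff_cell[OF perfect_matchings[OF M] perfect_matching_cube_vertex] by blast
  qed
  moreover have "e \<in> M" if "e \<in> base_edges" for e
  proof -
    have "flip_edges S \<subseteq> flip_edges {..<n}"
      using S unfolding flip_edges_def by blast
    then show ?thesis
      using that MS cube_vertex_eq_sym_diff_base[OF S] unfolding base_edges_def by blast
  qed
  ultimately show "M \<in> clar_matchings E flip_hexagons base_edges"
    unfolding clar_matchings_def flip_hexagons_def using perfect_matchings[OF M] by blast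
qed

text \<open>Both sides have \<open>2 ^ n\<close> elements.\<close>

lemma W_eq_clar_matchings: "W = clar_matchings E flip_hexagons base_edges"
proof (rule card_subset_eq[OF flips.finite_clar_matchings W_subset_clar_matchings])
  show "card W = card (clar_matchings E flip_hexagons base_edges)"
    using bij_betw_same_card[OF bij] card_lists_length_eq[of "UNIV :: bool set" n]
      flips.card_clar_matchings card_flip_hexagons by simp
qed

end

section \<open>The isomorphism between Clar covers and induced hypercubes\<close>

lemma fC_in_hypercube_subgraphs:
  assumes "finite E" "\<And>e. e \<in> E \<Longrightarrow> lattice_edge e" "clar_cover E F"
  shows "fC E F \<in> hypercube_subgraphs E"
proof -
  interpret clar_cover_of E F
    using assms by unfold_locales
  have "clar_matchings E (hex_comps E F) (edge_comps E F) \<subseteq> fst (resonance_graph E)"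
    unfolding fst_resonance_graph clar_matchings_def by blast
  then show ?thesis
    unfolding hypercube_subgraphs_def fC_eq_clar_matchings using comps.clar_matchings_hypercube by blast
qed

text \<open>A Clar cover is recovered from \<open>f(C)\<close> as the union of its perfect matchings.\<close>

lemma inj_on_fC:
  assumes "finite E" "\<And>e. e \<in> E \<Longrightarrow> lattice_edge e"
  shows "inj_on (fC E) {F. clar_cover E F}"
proof (rule inj_onI)
  fix F F' assume "F \<in> {F. clar_cover E F}" "F' \<in> {F. clar_cover E F}" and eq: "fC E F = fC E F'"
  then interpret F: clar_cover_of E F + F': clar_cover_of E F'
    using assms by (auto intro!: clar_cover_of.intro)
  have "clar_matchings E (hex_comps E F) (edge_comps E F) = clar_matchings E (hex_comps E F') (edge_comps E F')"
    using arg_cong[OF eq, of fst] unfolding fC_eq_clar_matchings fst_induced_subgraph .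
  then show "F = F'"
    using F.eq_clar_edges F'.eq_clar_edges F.comps.Union_clar_matchings F'.comps.Union_clar_matchings
    by metis
qed

lemma hypercube_subgraph_eq_fC:
  assumes lattice: "\<And>e. e \<in> E \<Longrightarrow> lattice_edge e" and G: "G \<in> hypercube_subgraphs E"
  shows "\<exists>F. clar_cover E F \<and> fC E F = G"
proof -
  obtain W n where W: "W \<subseteq> fst (resonance_graph E)" "G = induced_subgraph (resonance_graph E) W"
    and iso: "graph_iso G (hypercube n)"
    using G unfolding hypercube_subgraphs_def by blast
  have "fst G = W" "fst (hypercube n) = {xs. length xs = n}"
    unfolding W(2) fst_induced_subgraph by (simp_all add: hypercube_def)
  then obtain \<phi> where bij: "bij_betw \<phi> W {xs. length xs = n}"
    and adj: "\<forall>M\<in>W. \<forall>M'\<in>W. {M, M'} \<in> snd G \<longleftrightarrow> {\<phi> M, \<phi> M'} \<in> snd (hypercube n)"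
    using iso unfolding graph_iso_def by metis
  interpret resonance_hypercube E W n \<phi>
  proof
    show "M \<in> W \<Longrightarrow> perfect_matching E M" for M
      using W(1) unfolding fst_resonance_graph by blast
    show "{M, M'} \<in> snd (resonance_graph E) \<longleftrightarrow> {\<phi> M, \<phi> M'} \<in> snd (hypercube n)"
      if "M \<in> W" "M' \<in> W" for M M'
      using adj that induced_subgraph_edge_iff[OF that, of "resonance_graph E"] unfolding W(2) by simp
  qed (fact lattice bij)+
  have "fC E (base_edges \<union> hex_edges flip_hexagons) = G"
    unfolding fC_eq_clar_matchings flips.hex_comps_eq flips.edge_comps_eq
    using W(2) W_eq_clar_matchings by simp
  then show ?thesis
    using flips.clar_cover by blast
qed

theorem theorem2:
  assumes "hexagonal_system E" and "kekulean E"
  shows "bij_betw (fC E) {F. clar_cover E F} (hypercube_subgraphs E) \<and>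
         (\<forall>F\<in>{F. clar_cover E F}. \<forall>F'\<in>{F. clar_cover E F}.
            clar_le E F F' \<longleftrightarrow> subgraph (fC E F) (fC E F'))"
proof
  have finite: "finite E" and lattice: "\<And>e. e \<in> E \<Longrightarrow> lattice_edge e"
    using assms(1) unfolding hexagonal_system_def by blast+
  have "fC E ` {F. clar_cover E F} = hypercube_subgraphs E"
    using fC_in_hypercube_subgraphs[OF finite lattice] hypercube_subgraph_eq_fC[OF lattice] by blast
  then show "bij_betw (fC E) {F. clar_cover E F} (hypercube_subgraphs E)"
    unfolding bij_betw_def using inj_on_fC[OF finite lattice] by blast
  show "\<forall>F\<in>{F. clar_cover E F}. \<forall>F'\<in>{F. clar_cover E F}.
      clar_le E F F' \<longleftrightarrow> subgraph (fC E F) (fC E F')"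
    unfolding clar_le_def by blast
qed

end
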